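(* Let $\mathcal{G}=(\mathcal{V},\mathcal{E})$ be a finite connected graph, let $\Omega$ be the incidence matrix of an arbitrary orientation of $\mathcal{G}$, and let $q\ge1$. Then for all $\mu,\nu\in\mathcal{P}(\mathcal{V})$, $$W_1(\mu,\nu)=\inf_{f,v,g}\Big\{\Big(\int_0^1\sum_{k\in\mathcal{E}}g(t)_k|v(t)_k|^q\,dt\Big)^{1/q}: \partial_tf=\Omega\cdot(vg),\ f(0)=\mu,\ f(1)=\nu\Big\},$$ and the infimum is attained by at least one triple $(f,v,g)$.
   Context: For a finite graph whose edges have been given an orientation, each edge $k$ goes from $\lfloor k\rfloor$ to $\lceil k\rceil$. The incidence matrix $\Omega=(\omega_{x,k})$ has $\omega_{x,k}=1$ if $x=\lceil k\rceil$, $\omega_{x,k}=-1$ if $x=\lfloor k\rfloor$, and $0$ otherwise. $\mathcal{P}(\mathcal{V})$ and $\mathcal{P}(\mathcal{E})$ denote probability vectors on $\mathcal{V}$ and on $\mathcal{E}$. $W_1$ is the Wasserstein-1 distance on $\mathcal{P}(\mathcal{V})$ with cost the shortest-path distance of the underlying undirected graph (unit edge lengths): $W_1(\mu,\nu)=\min_\pi\sum_{x,y}d(x,y)\pi(x,y)$, the minimum taken over couplings $\pi$ of $\mu$ and $\nu$. The infimum ranges over triples $(f,v,g)$ consisting of an absolutely continuous $f:[0,1]\to\mathcal{P}(\mathcal{V})$, a measurable $v:[0,1]\to\mathbb{R}^{\mathcal{E}}$ and a measurable $g:[0,1]\to\mathcal{P}(\mathcal{E})$. The discrete transport equation $\partial_tf=\Omega\cdot(vg)$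 means $\partial_t f(t)_x=\sum_k\omega_{x,k}v(t)_kg(t)_k$ for a.e. $t$ and all $x$. *)

theory Defs
  imports "HOL-Analysis.Analysis"
begin

text \<open>The orientation is given by the maps lo (tail, floor k) and hi (head, ceiling k).\<close>

definition simple_oriented_graph :: "('e \<Rightarrow> 'v) \<Rightarrow> ('e \<Rightarrow> 'v) \<Rightarrow> bool" where
  "simple_oriented_graph lo hi \<longleftrightarrow>
     (\<forall>k. lo k \<noteq> hi k) \<and>
     (\<forall>k l. {lo k, hi k} = {lo l, hi l} \<longrightarrow> k = l)"

definition adj :: "('e \<Rightarrow> 'v) \<Rightarrow> ('e \<Rightarrow> 'v) \<Rightarrow> 'v \<Rightarrow> 'v \<Rightarrow> bool" where
  "adj lo hi x y \<longleftrightarrow> (\<exists>k. {lo k, hi k} = {x, y})"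

definition is_walk :: "('e \<Rightarrow> 'v) \<Rightarrow> ('e \<Rightarrow> 'v) \<Rightarrow> 'v list \<Rightarrow> 'v \<Rightarrow> 'v \<Rightarrow> bool" where
  "is_walk lo hi xs x y \<longleftrightarrow> xs \<noteq> [] \<and> hd xs = x \<and> last xs = y \<and>
     (\<forall>i. Suc i < length xs \<longrightarrow> adj lo hi (xs ! i) (xs ! Suc i))"

definition connected_graph :: "('e \<Rightarrow> 'v) \<Rightarrow> ('e \<Rightarrow> 'v) \<Rightarrow> bool" where
  "connected_graph lo hi \<longleftrightarrow> (\<forall>x y. \<exists>xs. is_walk lo hi xs x y)"

definition graph_dist :: "('e \<Rightarrow> 'v) \<Rightarrow> ('e \<Rightarrow> 'v) \<Rightarrow> 'v \<Rightarrow> 'v \<Rightarrow> nat" where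
  "graph_dist lo hi x y = (LEAST n. \<exists>xs. is_walk lo hi xs x y \<and> length xs = Suc n)"

definition incidence :: "('e \<Rightarrow> 'v) \<Rightarrow> ('e \<Rightarrow> 'v) \<Rightarrow> 'v \<Rightarrow> 'e \<Rightarrow> real" where
  "incidence lo hi x k = (if x = hi k then 1 else if x = lo k then -1 else 0)"

definition prob_vecs :: "('a::finite \<Rightarrow> real) set" where
  "prob_vecs = {p. (\<forall>x. 0 \<le> p x) \<and> (\<Sum>x\<in>UNIV. p x) = 1}"

definition couplings :: "('v::finite \<Rightarrow> real) \<Rightarrow> ('v \<Rightarrow> real) \<Rightarrow> ('v \<times> 'v \<Rightarrow> real) set" where
  "couplings \<mu> \<nu> = {\<pi>. (\<forall>z. 0 \<le> \<pi> z) \<and>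
      (\<forall>x. (\<Sum>y\<in>UNIV. \<pi> (x, y)) = \<mu> x) \<and> (\<forall>y. (\<Sum>x\<in>UNIV. \<pi> (x, y)) = \<nu> y)}"

definition W1 :: "('e \<Rightarrow> 'v) \<Rightarrow> ('e \<Rightarrow> 'v) \<Rightarrow> ('v::finite \<Rightarrow> real) \<Rightarrow> ('v \<Rightarrow> real) \<Rightarrow> real" where
  "W1 lo hi \<mu> \<nu> = Inf ((\<lambda>\<pi>. \<Sum>z\<in>UNIV. real (graph_dist lo hi (fst z) (snd z)) * \<pi> z) ` couplings \<mu> \<nu>)"

definition absolutely_continuous_real_on :: "(real \<Rightarrow> real) \<Rightarrow> real \<Rightarrow> real \<Rightarrow> bool" where
  "absolutely_continuous_real_on h a b \<longleftrightarrow>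
     (\<forall>\<epsilon>>0. \<exists>\<delta>>0. \<forall>(n::nat) (c::nat \<Rightarrow> real) (d::nat \<Rightarrow> real).
        (\<forall>i<n. a \<le> c i \<and> c i \<le> d i \<and> d i \<le> b) \<and>
        (\<forall>i<n. \<forall>j<n. i \<noteq> j \<longrightarrow> {c i<..<d i} \<inter> {c j<..<d j} = {}) \<and>
        (\<Sum>i<n. d i - c i) < \<delta>
        \<longrightarrow> (\<Sum>i<n. \<bar>h (d i) - h (c i)\<bar>) < \<epsilon>)"

text \<open>A curve in R^V is absolutely continuous iff each coordinate is (V finite).\<close>
definition admissible ::
  "('e::finite \<Rightarrow> 'v::finite) \<Rightarrow> ('e \<Rightarrow> 'v) \<Rightarrow> ('v \<Rightarrow> real) \<Rightarrow> ('v \<Rightarrow> real)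
   \<Rightarrow> (real \<Rightarrow> 'v \<Rightarrow> real) \<Rightarrow> (real \<Rightarrow> 'e \<Rightarrow> real) \<Rightarrow> (real \<Rightarrow> 'e \<Rightarrow> real) \<Rightarrow> bool" where
  "admissible lo hi \<mu> \<nu> f v g \<longleftrightarrow>
     (\<forall>t\<in>{0..1}. f t \<in> prob_vecs) \<and>
     (\<forall>x. absolutely_continuous_real_on (\<lambda>t. f t x) 0 1) \<and>
     (\<forall>k. (\<lambda>t. v t k) \<in> borel_measurable (restrict_space lborel {0..1})) \<and>
     (\<forall>k. (\<lambda>t. g t k) \<in> borel_measurable (restrict_space lborel {0..1})) \<and>
     (\<forall>t\<in>{0..1}. g t \<in> prob_vecs) \<and>
     (AE t in lborel. t \<in> {0..1} \<longrightarrow>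
        (\<forall>x. ((\<lambda>s. f s x) has_real_derivative
               (\<Sum>k\<in>UNIV. incidence lo hi x k * v t k * g t k)) (at t within {0..1}))) \<and>
     f 0 = \<mu> \<and> f 1 = \<nu>"

definition enn_root :: "real \<Rightarrow> ennreal \<Rightarrow> ennreal" where
  "enn_root q I = (if I = \<infinity> then \<infinity> else ennreal (enn2real I powr (1 / q)))"

definition action :: "real \<Rightarrow> (real \<Rightarrow> 'e::finite \<Rightarrow> real) \<Rightarrow> (real \<Rightarrow> 'e \<Rightarrow> real) \<Rightarrow> ennreal" where
  "action q v g = enn_root q
     (\<integral>\<^sup>+ t. ennreal (\<Sum>k\<in>UNIV. g t k * \<bar>v t k\<bar> powr q) * indicator {0..1} t \<partial>lborel)"

end

theory Submission
  imports Defs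
begin

(* Both sides equal the least mass \<Sum>k |J k| of a flow J with \<Omega> \<cdot> J = \<nu> - \<mu> (Beckmann's problem).
   A flow yields a coupling of no larger cost: peel off one edge at a time, carry its current
   by a point mass between the endpoints, and cancel the mass thus added to both marginals by
   gluing plans through the common vertex (triangle inequality). Conversely, superposing unit
   flows along shortest paths, weighted by an optimal coupling, gives a flow of mass W1.
   For an admissible (f, v, g), the fundamental theorem of calculus for the absolutely
   continuous curve f shows that J = \<integral>\<^sub>0\<^sup>1 v g dt is such a flow, and by Jensen's
   inequality its mass is at most the action. The bound W1 is attained by moving f linearly
   from \<mu> to \<nu> with v and g constant in time, read off from an optimal flow. *)

section \<open>Walks and graph distance\<close>

lemma all_Suc_less_Cons2:
  "(\<forall>i. Suc i < length (u # w # r) \<longrightarrow> P i) \<longleftrightarrow> P 0 \<and> (\<forall>i. Suc i < length (w # r) \<longrightarrow> P (Suc i))"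
  by (auto simp: less_Suc_eq_0_disj)

lemma is_walk_singleton: "is_walk lo hi [u] x y \<longleftrightarrow> u = x \<and> u = y"
  by (auto simp: is_walk_def)

lemma is_walk_Cons_Cons:
  "is_walk lo hi (u # w # r) x y \<longleftrightarrow> u = x \<and> adj lo hi u w \<and> is_walk lo hi (w # r) w y"
  unfolding is_walk_def all_Suc_less_Cons2 by auto

lemma is_walk_append:
  "is_walk lo hi xs x y \<Longrightarrow> is_walk lo hi ys y z \<Longrightarrow> is_walk lo hi (xs @ tl ys) x z"
proof (induction xs arbitrary: x rule: induct_list012)
  case 1
  then show ?case by (simp add: is_walk_def)
next
  case (2 u)
  then show ?case by (cases ys) (auto simp: is_walk_def)
next
  case (3 u w r)
  then show ?case by (auto simp: is_walk_Cons_Cons)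
qed

lemma graph_dist_le: "is_walk lo hi xs x y \<Longrightarrow> graph_dist lo hi x y \<le> length xs - 1"
  unfolding graph_dist_def by (rule Least_le) (auto simp: is_walk_def)

lemma shortest_walk_exists:
  assumes "connected_graph lo hi"
  obtains xs where "is_walk lo hi xs x y" "length xs = Suc (graph_dist lo hi x y)"
proof -
  obtain xs where "is_walk lo hi xs x y" using assms unfolding connected_graph_def by blast
  then have "\<exists>n xs. is_walk lo hi xs x y \<and> length xs = Suc n"
    by (auto simp: is_walk_def intro!: exI[of _ "length xs - 1"])
  then have "\<exists>xs. is_walk lo hi xs x y \<and> length xs = Suc (graph_dist lo hi x y)"
    unfolding graph_dist_def by (rule LeastI_ex)
  with that show ?thesis by blast
qed

lemma graph_dist_self [simp]: "graph_dist lo hi x x = 0"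
  using graph_dist_le[of lo hi "[x]" x x] by (simp add: is_walk_def)

lemma graph_dist_edge_le: "graph_dist lo hi (lo k) (hi k) \<le> 1" "graph_dist lo hi (hi k) (lo k) \<le> 1"
proof -
  have "is_walk lo hi [lo k, hi k] (lo k) (hi k)" "is_walk lo hi [hi k, lo k] (hi k) (lo k)"
    by (auto simp: is_walk_Cons_Cons is_walk_singleton adj_def insert_commute)
  then show "graph_dist lo hi (lo k) (hi k) \<le> 1" "graph_dist lo hi (hi k) (lo k) \<le> 1"
    using graph_dist_le by fastforce+
qed

lemma graph_dist_triangle:
  assumes "connected_graph lo hi"
  shows "graph_dist lo hi x z \<le> graph_dist lo hi x y + graph_dist lo hi y z"
proof -
  obtain xs where xs: "is_walk lo hi xs x y" "length xs = Suc (graph_dist lo hi x y)"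
    using shortest_walk_exists[OF assms] .
  obtain ys where ys: "is_walk lo hi ys y z" "length ys = Suc (graph_dist lo hi y z)"
    using shortest_walk_exists[OF assms] .
  from graph_dist_le[OF is_walk_append[OF xs(1) ys(1)]] show ?thesis using xs ys by simp
qed

section \<open>Flows and couplings\<close>

definition net_inflow :: "('e \<Rightarrow> 'v) \<Rightarrow> ('e \<Rightarrow> 'v) \<Rightarrow> ('e::finite \<Rightarrow> real) \<Rightarrow> 'v \<Rightarrow> real" where
  "net_inflow lo hi J x = (\<Sum>k\<in>UNIV. incidence lo hi x k * J k)"

lemma net_inflow_add: "net_inflow lo hi (\<lambda>k. J k + J' k) x = net_inflow lo hi J x + net_inflow lo hi J' x"
  by (simp add: net_inflow_def distrib_left sum.distrib)

lemma net_inflow_single_edge: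
  assumes "lo k \<noteq> hi k"
  shows "net_inflow lo hi (\<lambda>l. if l = k then c else 0) x
           = c * ((if x = hi k then 1 else 0) - (if x = lo k then 1 else 0))"
proof -
  have "incidence lo hi x l * (if l = k then c else 0) = (if l = k then incidence lo hi x k * c else 0)" for l
    by simp
  then have "net_inflow lo hi (\<lambda>l. if l = k then c else 0) x = incidence lo hi x k * c"
    by (simp add: net_inflow_def)
  then show ?thesis using assms by (simp add: incidence_def)
qed

lemma walk_unit_flow:
  fixes lo hi :: "'e::finite \<Rightarrow> 'v"
  assumes "\<forall>k. lo k \<noteq> hi k" and "is_walk lo hi xs x y"
  shows "\<exists>P. (\<forall>z. net_inflow lo hi P z = (if z = y then 1 else 0) - (if z = x then 1 else 0))
           \<and> (\<Sum>k\<in>UNIV. \<bar>P k\<bar>) \<le> real (length xs - 1)"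
  using assms(2)
proof (induction xs arbitrary: x rule: induct_list012)
  case 1
  then show ?case by (simp add: is_walk_def)
next
  case (2 u)
  then have "x = y" by (auto simp: is_walk_singleton)
  then show ?case by (intro exI[of _ "\<lambda>_. 0"]) (simp add: net_inflow_def)
next
  case (3 u w r)
  then have "u = x" and uw: "adj lo hi u w" and walk: "is_walk lo hi (w # r) w y"
    by (auto simp: is_walk_Cons_Cons)
  obtain P where P: "\<And>z. net_inflow lo hi P z = (if z = y then 1 else 0) - (if z = w then 1 else 0)"
    and P1: "(\<Sum>k\<in>UNIV. \<bar>P k\<bar>) \<le> real (length (w # r) - 1)"
    using "3.IH"(2)[OF walk] by blast
  obtain k where k: "{lo k, hi k} = {u, w}" using uw unfolding adj_def by blast
  define s where "s = (if lo k = u then 1 else - 1 :: real)"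
  define Q where "Q l = (if l = k then s else 0)" for l
  have Q: "net_inflow lo hi Q z = (if z = w then 1 else 0) - (if z = u then 1 else 0)" for z
    using k assms(1) unfolding Q_def s_def by (auto simp: net_inflow_single_edge doubleton_eq_iff)
  have "(\<Sum>l\<in>UNIV. \<bar>Q l\<bar>) = \<bar>s\<bar>"
    by (simp add: Q_def if_distrib cong: if_cong)
  then have Q1: "(\<Sum>l\<in>UNIV. \<bar>Q l\<bar>) = 1"
    by (simp add: s_def)
  have "(\<Sum>l\<in>UNIV. \<bar>P l + Q l\<bar>) \<le> (\<Sum>l\<in>UNIV. \<bar>P l\<bar>) + (\<Sum>l\<in>UNIV. \<bar>Q l\<bar>)"
    by (simp add: sum_mono abs_triangle_ineq flip: sum.distrib)
  then show ?case using P1 Q1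
    by (intro exI[of _ "\<lambda>l. P l + Q l"]) (simp add: net_inflow_add P Q \<open>u = x\<close>)
qed

definition transport_cost :: "('v \<Rightarrow> 'v \<Rightarrow> real) \<Rightarrow> ('v \<times> 'v \<Rightarrow> real) \<Rightarrow> real" where
  "transport_cost d \<pi> = (\<Sum>z\<in>UNIV. d (fst z) (snd z) * \<pi> z)"

lemma transport_cost_iterated:
  fixes d :: "'v::finite \<Rightarrow> 'v \<Rightarrow> real"
  shows "transport_cost d \<pi> = (\<Sum>x\<in>UNIV. \<Sum>y\<in>UNIV. d x y * \<pi> (x, y))"
  unfolding transport_cost_def by (simp add: sum.cartesian_product split_beta)

lemma couplingsD:
  assumes "\<pi> \<in> couplings \<mu> \<nu>"
  shows "0 \<le> \<pi> z" "(\<Sum>y\<in>UNIV. \<pi> (x, y)) = \<mu> x" "(\<Sum>x\<in>UNIV. \<pi> (x, y)) = \<nu> y"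
  using assms unfolding couplings_def mem_Collect_eq by blast+

lemma product_plan_cost_le_through:
  fixes d :: "'v::finite \<Rightarrow> 'v \<Rightarrow> real"
  assumes tri: "\<And>x y z. d x z \<le> d x y + d y z"
    and a: "a \<in> prob_vecs" and b: "b \<in> prob_vecs"
  shows "(\<Sum>x\<in>UNIV. \<Sum>z\<in>UNIV. d x z * (a x * b z)) \<le> (\<Sum>x\<in>UNIV. d x y * a x) + (\<Sum>z\<in>UNIV. d y z * b z)"
proof -
  have a0: "0 \<le> a x" and b0: "0 \<le> b x" and sa: "(\<Sum>x\<in>UNIV. a x) = 1" and sb: "(\<Sum>x\<in>UNIV. b x) = 1" for x
    using a b by (auto simp: prob_vecs_def)
  have "(\<Sum>x\<in>UNIV. \<Sum>z\<in>UNIV. d x z * (a x * b z)) \<le> (\<Sum>x\<in>UNIV. \<Sum>z\<in>UNIV. (d x y + d y z) * (a x * b z))"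
    using a0 b0 by (intro sum_mono mult_right_mono tri) simp
  also have "\<dots> = (\<Sum>x\<in>UNIV. \<Sum>z\<in>UNIV. d x y * a x * b z) + (\<Sum>x\<in>UNIV. \<Sum>z\<in>UNIV. d y z * b z * a x)"
    by (simp add: algebra_simps sum.distrib)
  also have "(\<Sum>x\<in>UNIV. \<Sum>z\<in>UNIV. d x y * a x * b z) = (\<Sum>x\<in>UNIV. d x y * a x)"
    by (simp add: sb flip: sum_distrib_left)
  also have "(\<Sum>x\<in>UNIV. \<Sum>z\<in>UNIV. d y z * b z * a x) = (\<Sum>z\<in>UNIV. d y z * b z)"
    by (subst sum.swap) (simp add: sa flip: sum_distrib_left)
  finally show ?thesis .
qed

lemma couplings_add_point_mass:
  assumes "\<pi> \<in> couplings \<mu> \<nu>" and "0 \<le> \<pi> (a, b) + c"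
  shows "(\<lambda>z. \<pi> z + (if z = (a, b) then c else 0))
           \<in> couplings (\<lambda>x. \<mu> x + (if x = a then c else 0)) (\<lambda>y. \<nu> y + (if y = b then c else 0))"
proof -
  have "(\<Sum>y\<in>UNIV. if (x, y) = (a, b) then c else 0) = (if x = a then c else 0)" for x
    by (cases "x = a") simp_all
  moreover have "(\<Sum>x\<in>UNIV. if (x, y) = (a, b) then c else 0) = (if y = b then c else 0)" for y
    by (cases "y = b") simp_all
  moreover have "0 \<le> \<pi> z + (if z = (a, b) then c else 0)" for z
    using assms couplingsD(1)[OF assms(1), of z] by auto
  ultimately show ?thesis
    using couplingsD(2,3)[OF assms(1)] unfolding couplings_def mem_Collect_eq by (simp add: sum.distrib)
qed

lemma transport_cost_add_point_mass:
  fixes d :: "'v::finite \<Rightarrow> 'v \<Rightarrow> real"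
  shows "transport_cost d (\<lambda>z. \<pi> z + (if z = (a, b) then c else 0)) = transport_cost d \<pi> + c * d a b"
proof -
  have "d (fst z) (snd z) * (if z = (a, b) then c else 0) = (if z = (a, b) then c * d a b else 0)" for z
    by auto
  then show ?thesis by (simp add: transport_cost_def distrib_left sum.distrib)
qed

lemma diagonal_coupling:
  fixes \<mu> :: "'v::finite \<Rightarrow> real"
  assumes "\<forall>x. 0 \<le> \<mu> x"
  shows "(\<lambda>(x, y). if x = y then \<mu> x else 0) \<in> couplings \<mu> \<mu>"
  using assms by (auto simp: couplings_def)

lemma transport_cost_diagonal:
  fixes d :: "'v::finite \<Rightarrow> 'v \<Rightarrow> real"
  assumes "\<And>x. d x x = 0"
  shows "transport_cost d (\<lambda>(x, y). if x = y then \<mu> x else 0) = 0"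
proof -
  have "d x y * (if x = y then \<mu> x else 0) = 0" for x y
    using assms by simp
  then show ?thesis unfolding transport_cost_iterated by (intro sum.neutral ballI) simp
qed

text \<open>The plans a into y and b out of y, each carrying the mass e, are replaced by their
  product, which is no more expensive by the triangle inequality.\<close>
lemma coupling_reroute_through:
  fixes d :: "'v::finite \<Rightarrow> 'v \<Rightarrow> real"
  assumes tri: "\<And>x y z. d x z \<le> d x y + d y z"
    and \<mu>0: "\<forall>x. 0 \<le> \<mu> x" and \<nu>0: "\<forall>x. 0 \<le> \<nu> x" and e: "0 < e"
    and \<pi>: "\<pi> \<in> couplings (\<lambda>x. \<mu> x + (if x = y then e else 0)) (\<lambda>x. \<nu> x + (if x = y then e else 0))"
    and \<pi>yy: "\<pi> (y, y) = 0"
  shows "\<exists>\<pi>'\<in>couplings \<mu> \<nu>. transport_cost d \<pi>' \<le> transport_cost d \<pi>"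
proof -
  note \<pi>0 = couplingsD(1)[OF \<pi>] and row = couplingsD(2)[OF \<pi>] and col = couplingsD(3)[OF \<pi>]
  have pos: "0 < \<nu> y + e" "0 < \<mu> y + e" using \<mu>0 \<nu>0 e by (auto intro: add_nonneg_pos)
  define a where "a x = \<pi> (x, y) / (\<nu> y + e)" for x
  define b where "b z = \<pi> (y, z) / (\<mu> y + e)" for z
  have a: "a \<in> prob_vecs" and b: "b \<in> prob_vecs"
    using \<pi>0 pos col[of y] row[of y] by (simp_all add: prob_vecs_def a_def b_def flip: sum_divide_distrib)
  have sa: "(\<Sum>x\<in>UNIV. a x) = 1" and sb: "(\<Sum>z\<in>UNIV. b z) = 1"
    using a b by (simp_all add: prob_vecs_def)
  define \<pi>' where "\<pi>' = (\<lambda>(x, z). \<pi> (x, z) + e * (a x * b z)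
      - (if z = y then e * a x else 0) - (if x = y then e * b z else 0))"
  have "0 \<le> \<pi>' (x, z)" for x z
  proof -
    have "e * a x \<le> \<pi> (x, y)" "e * b z \<le> \<pi> (y, z)"
      using pos e \<pi>0 \<mu>0 \<nu>0 by (auto simp: a_def b_def field_simps)
    moreover have "0 \<le> e * (a x * b z)" using a b e by (simp add: prob_vecs_def)
    ultimately show ?thesis
      using \<pi>yy \<pi>0[of "(x, z)"] by (auto simp: \<pi>'_def a_def b_def)
  qed
  moreover have "(\<Sum>z\<in>UNIV. \<pi>' (x, z)) = \<mu> x" for x
    using row[of x] sb by (simp add: \<pi>'_def sum.distrib sum_subtractf flip: sum_distrib_left)
  moreover have "(\<Sum>x\<in>UNIV. \<pi>' (x, z)) = \<nu> z" for z
    using col[of z] sa by (simp add: \<pi>'_def sum.distrib sum_subtractf flip: sum_distrib_left sum_distrib_right)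
  ultimately have "\<pi>' \<in> couplings \<mu> \<nu>" by (auto simp: couplings_def)
  moreover have cost: "transport_cost d \<pi>' = transport_cost d \<pi> + e * (\<Sum>x\<in>UNIV. \<Sum>z\<in>UNIV. d x z * (a x * b z))
      - e * (\<Sum>x\<in>UNIV. d x y * a x) - e * (\<Sum>z\<in>UNIV. d y z * b z)"
  proof -
    have "d x z * \<pi>' (x, z) = d x z * \<pi> (x, z) + e * (d x z * (a x * b z))
        - (if z = y then e * (d x y * a x) else 0) - (if x = y then e * (d y z * b z) else 0)" for x z
      by (simp add: \<pi>'_def algebra_simps)
    moreover have "(\<Sum>x\<in>UNIV. \<Sum>z\<in>UNIV. if x = y then F z else 0) = (\<Sum>z\<in>UNIV. F z)" for F :: "'v \<Rightarrow> real"
      by (subst sum.swap) simp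
    ultimately show ?thesis
      by (simp add: transport_cost_iterated sum.distrib sum_subtractf sum_distrib_left)
  qed
  have "e * (\<Sum>x\<in>UNIV. \<Sum>z\<in>UNIV. d x z * (a x * b z)) \<le> e * ((\<Sum>x\<in>UNIV. d x y * a x) + (\<Sum>z\<in>UNIV. d y z * b z))"
    using product_plan_cost_le_through[where d = d and y = y, OF tri a b] e by (intro mult_left_mono) simp_all
  then have "transport_cost d \<pi>' \<le> transport_cost d \<pi>"
    unfolding cost distrib_left by linarith
  ultimately show ?thesis by blast
qed

lemma couplings_cancel_common_mass:
  fixes d :: "'v::finite \<Rightarrow> 'v \<Rightarrow> real"
  assumes tri: "\<And>x y z. d x z \<le> d x y + d y z" and dyy: "d y y = 0"
    and \<mu>0: "\<forall>x. 0 \<le> \<mu> x" and \<nu>0: "\<forall>x. 0 \<le> \<nu> x" and "0 \<le> c"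
    and \<pi>: "\<pi> \<in> couplings (\<lambda>x. \<mu> x + (if x = y then c else 0)) (\<lambda>x. \<nu> x + (if x = y then c else 0))"
  shows "\<exists>\<pi>'\<in>couplings \<mu> \<nu>. transport_cost d \<pi>' \<le> transport_cost d \<pi>"
proof -
  define r where "r = min c (\<pi> (y, y))"
  define \<pi>1 where "\<pi>1 z = \<pi> z + (if z = (y, y) then - r else 0)" for z
  have "\<pi>1 \<in> couplings (\<lambda>x. \<mu> x + (if x = y then c else 0) + (if x = y then - r else 0))
      (\<lambda>x. \<nu> x + (if x = y then c else 0) + (if x = y then - r else 0))"
    unfolding \<pi>1_def by (rule couplings_add_point_mass[OF \<pi>]) (simp add: r_def)
  moreover have "(\<lambda>x. f x + (if x = y then c else 0) + (if x = y then - r else 0))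
      = (\<lambda>x. f x + (if x = y then c - r else 0))" for f :: "'v \<Rightarrow> real"
    by auto
  ultimately have \<pi>1: "\<pi>1 \<in> couplings (\<lambda>x. \<mu> x + (if x = y then c - r else 0)) (\<lambda>x. \<nu> x + (if x = y then c - r else 0))"
    by simp
  have cost: "transport_cost d \<pi>1 = transport_cost d \<pi>"
    unfolding \<pi>1_def by (simp add: transport_cost_add_point_mass dyy)
  show ?thesis
  proof (cases "c \<le> \<pi> (y, y)")
    case True
    then have "c - r = 0" by (simp add: r_def)
    with \<pi>1 have "\<pi>1 \<in> couplings \<mu> \<nu>" by (simp only: if_cancel add_0_right)
    then show ?thesis using cost by (intro bexI[of _ \<pi>1]) simp_all
  next
    case False
    then have "0 < c - r" "\<pi>1 (y, y) = 0" by (simp_all add: r_def \<pi>1_def)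
    from coupling_reroute_through[where d = d, OF tri \<mu>0 \<nu>0 this(1) \<pi>1 this(2)] show ?thesis
      unfolding cost .
  qed
qed

lemma net_inflow_remove_edge:
  assumes "lo k \<noteq> hi k" and flow: "\<And>x. net_inflow lo hi J x = \<nu> x - \<mu> x"
  obtains a b where "(a, b) = (lo k, hi k) \<or> (a, b) = (hi k, lo k)"
    and "\<And>x. net_inflow lo hi (J(k := 0)) x
               = (\<nu> x + (if x = a then \<bar>J k\<bar> else 0)) - (\<mu> x + (if x = b then \<bar>J k\<bar> else 0))"
proof -
  have split: "net_inflow lo hi J x = net_inflow lo hi (J(k := 0)) x + J k *
      ((if x = hi k then 1 else 0) - (if x = lo k then 1 else 0))" for x
  proof -
    have "net_inflow lo hi J x = net_inflow lo hi (\<lambda>l. (J(k := 0)) l + (if l = k then J k else 0)) x"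
      by (rule arg_cong[where f = "\<lambda>J. net_inflow lo hi J x"]) auto
    then show ?thesis by (simp only: net_inflow_add net_inflow_single_edge[where lo = lo and hi = hi and k = k, OF assms(1)])
  qed
  show ?thesis
  proof (cases "0 \<le> J k")
    case True
    have "net_inflow lo hi (J(k := 0)) x
        = (\<nu> x + (if x = lo k then \<bar>J k\<bar> else 0)) - (\<mu> x + (if x = hi k then \<bar>J k\<bar> else 0))" for x
      using flow[of x] split[of x] True by (cases "x = lo k"; cases "x = hi k") (simp_all add: algebra_simps)
    then show ?thesis using that[of "lo k" "hi k"] by blast
  next
    case False
    have "net_inflow lo hi (J(k := 0)) x
        = (\<nu> x + (if x = hi k then \<bar>J k\<bar> else 0)) - (\<mu> x + (if x = lo k then \<bar>J k\<bar> else 0))" for x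
      using flow[of x] split[of x] False by (cases "x = lo k"; cases "x = hi k") (simp_all add: algebra_simps)
    then show ?thesis using that[of "hi k" "lo k"] by blast
  qed
qed

text \<open>The current on edge k is carried by a point mass between its endpoints a and b; the mass
  this adds at a and at b to both marginals is then cancelled.\<close>
lemma coupling_of_flow_remove_edge:
  fixes lo hi :: "'e::finite \<Rightarrow> 'v::finite" and d :: "'v \<Rightarrow> 'v \<Rightarrow> real"
  assumes lohi: "\<forall>k. lo k \<noteq> hi k"
    and tri: "\<And>x y z. d x z \<le> d x y + d y z" and d0: "\<And>x. d x x = 0"
    and d1: "\<And>k. d (lo k) (hi k) \<le> 1" "\<And>k. d (hi k) (lo k) \<le> 1"
    and \<mu>0: "\<forall>x. 0 \<le> \<mu> x" and \<nu>0: "\<forall>x. 0 \<le> \<nu> x"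
    and flow: "\<And>x. net_inflow lo hi J x = \<nu> x - \<mu> x"
    and IH: "\<And>\<mu>' \<nu>'. \<forall>x. 0 \<le> \<mu>' x \<Longrightarrow> \<forall>x. 0 \<le> \<nu>' x \<Longrightarrow> (\<And>x. net_inflow lo hi (J(k := 0)) x = \<nu>' x - \<mu>' x)
       \<Longrightarrow> \<exists>\<pi>\<in>couplings \<mu>' \<nu>'. transport_cost d \<pi> \<le> (\<Sum>l\<in>UNIV. \<bar>(J(k := 0)) l\<bar>)"
  shows "\<exists>\<pi>\<in>couplings \<mu> \<nu>. transport_cost d \<pi> \<le> (\<Sum>l\<in>UNIV. \<bar>J l\<bar>)"
proof -
  define c where "c = \<bar>J k\<bar>"
  obtain a b where ab: "(a, b) = (lo k, hi k) \<or> (a, b) = (hi k, lo k)"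
    and flow': "\<And>x. net_inflow lo hi (J(k := 0)) x
      = (\<nu> x + (if x = a then c else 0)) - (\<mu> x + (if x = b then c else 0))"
    using net_inflow_remove_edge[OF _ flow, of k] lohi unfolding c_def by blast
  have "\<forall>x. 0 \<le> \<mu> x + (if x = b then c else 0)" "\<forall>x. 0 \<le> \<nu> x + (if x = a then c else 0)"
    using \<mu>0 \<nu>0 by (simp_all add: c_def)
  from IH[OF this flow'] obtain \<pi>0
    where \<pi>0: "\<pi>0 \<in> couplings (\<lambda>x. \<mu> x + (if x = b then c else 0)) (\<lambda>x. \<nu> x + (if x = a then c else 0))"
    and cost0: "transport_cost d \<pi>0 \<le> (\<Sum>l\<in>UNIV. \<bar>(J(k := 0)) l\<bar>)"
    by blast
  define \<pi>1 where "\<pi>1 z = \<pi>0 z + (if z = (a, b) then c else 0)" for z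
  have "\<pi>1 \<in> couplings (\<lambda>x. (\<mu> x + (if x = b then c else 0)) + (if x = a then c else 0))
      (\<lambda>x. (\<nu> x + (if x = a then c else 0)) + (if x = b then c else 0))"
    unfolding \<pi>1_def using couplingsD(1)[OF \<pi>0] by (intro couplings_add_point_mass[OF \<pi>0]) (simp add: c_def)
  moreover have "(\<lambda>x. (\<nu> x + (if x = a then c else 0)) + (if x = b then c else 0))
      = (\<lambda>x. (\<nu> x + (if x = b then c else 0)) + (if x = a then c else 0))" by auto
  ultimately have \<pi>1: "\<pi>1 \<in> couplings (\<lambda>x. (\<mu> x + (if x = b then c else 0)) + (if x = a then c else 0))
      (\<lambda>x. (\<nu> x + (if x = b then c else 0)) + (if x = a then c else 0))" by simp
  have "\<bar>J l\<bar> = \<bar>(J(k := 0)) l\<bar> + (if l = k then c else 0)" for l by (simp add: c_def)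
  then have "(\<Sum>l\<in>UNIV. \<bar>J l\<bar>) = (\<Sum>l\<in>UNIV. \<bar>(J(k := 0)) l\<bar>) + c" by (simp add: sum.distrib)
  moreover have "c * d a b \<le> c" using ab d1 mult_left_mono[of "d a b" 1 c] by (auto simp: c_def)
  ultimately have cost1: "transport_cost d \<pi>1 \<le> (\<Sum>l\<in>UNIV. \<bar>J l\<bar>)"
    using cost0 unfolding \<pi>1_def transport_cost_add_point_mass by linarith
  obtain \<pi>2 where \<pi>2: "\<pi>2 \<in> couplings (\<lambda>x. \<mu> x + (if x = b then c else 0)) (\<lambda>x. \<nu> x + (if x = b then c else 0))"
    and cost2: "transport_cost d \<pi>2 \<le> transport_cost d \<pi>1"
    using couplings_cancel_common_mass[where d = d, OF tri d0 _ _ _ \<pi>1] \<mu>0 \<nu>0 by (auto simp: c_def)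
  obtain \<pi>3 where "\<pi>3 \<in> couplings \<mu> \<nu>" and "transport_cost d \<pi>3 \<le> transport_cost d \<pi>2"
    using couplings_cancel_common_mass[where d = d, OF tri d0 \<mu>0 \<nu>0 _ \<pi>2] by (auto simp: c_def)
  then show ?thesis using cost1 cost2 by (intro bexI[of _ \<pi>3]) simp_all
qed

lemma coupling_of_flow:
  fixes lo hi :: "'e::finite \<Rightarrow> 'v::finite" and d :: "'v \<Rightarrow> 'v \<Rightarrow> real"
  assumes lohi: "\<forall>k. lo k \<noteq> hi k"
    and tri: "\<And>x y z. d x z \<le> d x y + d y z" and d0: "\<And>x. d x x = 0"
    and d1: "\<And>k. d (lo k) (hi k) \<le> 1" "\<And>k. d (hi k) (lo k) \<le> 1"
    and \<mu>0: "\<forall>x. 0 \<le> \<mu> x" and \<nu>0: "\<forall>x. 0 \<le> \<nu> x"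
    and flow: "\<And>x. net_inflow lo hi J x = \<nu> x - \<mu> x"
  shows "\<exists>\<pi>\<in>couplings \<mu> \<nu>. transport_cost d \<pi> \<le> (\<Sum>k\<in>UNIV. \<bar>J k\<bar>)"
proof -
  have "\<forall>\<mu> \<nu> J. (\<forall>k. k \<notin> S \<longrightarrow> J k = 0) \<longrightarrow> (\<forall>x. 0 \<le> \<mu> x) \<longrightarrow> (\<forall>x. 0 \<le> \<nu> x)
      \<longrightarrow> (\<forall>x. net_inflow lo hi J x = \<nu> x - \<mu> x)
      \<longrightarrow> (\<exists>\<pi>\<in>couplings \<mu> \<nu>. transport_cost d \<pi> \<le> (\<Sum>k\<in>UNIV. \<bar>J k\<bar>))" for S :: "'e set"
  proof (induction S rule: finite_induct[OF finite])
    case 1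
    show ?case
    proof (intro allI impI)
      fix \<mu> \<nu> :: "'v \<Rightarrow> real" and J :: "'e \<Rightarrow> real"
      assume "\<forall>k. k \<notin> {} \<longrightarrow> J k = 0" "\<forall>x. 0 \<le> \<mu> x" "\<forall>x. 0 \<le> \<nu> x"
        and "\<forall>x. net_inflow lo hi J x = \<nu> x - \<mu> x"
      then have "\<nu> = \<mu>" "J = (\<lambda>_. 0)" by (auto simp: net_inflow_def)
      moreover have "transport_cost d (\<lambda>(x, y). if x = y then \<mu> x else 0) = 0"
        using transport_cost_diagonal[where d = d, OF d0] .
      ultimately show "\<exists>\<pi>\<in>couplings \<mu> \<nu>. transport_cost d \<pi> \<le> (\<Sum>k\<in>UNIV. \<bar>J k\<bar>)"
        using diagonal_coupling[OF \<open>\<forall>x. 0 \<le> \<mu> x\<close>] by force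
    qed
  next
    case (2 k S)
    show ?case
    proof (intro allI impI)
      fix \<mu> \<nu> :: "'v \<Rightarrow> real" and J :: "'e \<Rightarrow> real"
      assume "\<forall>l. l \<notin> insert k S \<longrightarrow> J l = 0" "\<forall>x. 0 \<le> \<mu> x" "\<forall>x. 0 \<le> \<nu> x"
        and "\<forall>x. net_inflow lo hi J x = \<nu> x - \<mu> x"
      moreover from this(1) have "\<forall>l. l \<notin> S \<longrightarrow> (J(k := 0)) l = 0" by simp
      ultimately show "\<exists>\<pi>\<in>couplings \<mu> \<nu>. transport_cost d \<pi> \<le> (\<Sum>l\<in>UNIV. \<bar>J l\<bar>)"
        using "2.IH" by (intro coupling_of_flow_remove_edge[where d = d, OF lohi tri d0 d1]) blast+
    qed
  qed
  then show ?thesis using \<mu>0 \<nu>0 flow by blast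
qed

lemma product_coupling:
  assumes "\<mu> \<in> prob_vecs" and "\<nu> \<in> prob_vecs"
  shows "(\<lambda>z. \<mu> (fst z) * \<nu> (snd z)) \<in> couplings \<mu> \<nu>"
  using assms unfolding couplings_def prob_vecs_def
  by (auto simp flip: sum_distrib_left sum_distrib_right)

lemma compact_couplings:
  fixes \<mu> \<nu> :: "'v::finite \<Rightarrow> real"
  assumes \<mu>: "\<mu> \<in> prob_vecs"
  shows "compact {x :: real^('v\<times>'v). vec_nth x \<in> couplings \<mu> \<nu>}" (is "compact ?K")
proof -
  have "?K = (\<Inter>z. {x. 0 \<le> x $ z}) \<inter> (\<Inter>a. {x. (\<Sum>b\<in>UNIV. x $ (a, b)) = \<mu> a})
      \<inter> (\<Inter>b. {x. (\<Sum>a\<in>UNIV. x $ (a, b)) = \<nu> b})"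
    unfolding couplings_def by auto
  then have "closed ?K"
    by (simp only:) (intro closed_Int closed_INT ballI closed_Collect_le closed_Collect_eq continuous_intros)
  moreover have "bounded ?K"
  proof -
    have "\<bar>x $ (a, b)\<bar> \<le> 1" if "x \<in> ?K" for x a b
    proof -
      have cp: "vec_nth x \<in> couplings \<mu> \<nu>" using that by simp
      have "x $ (a, b) \<le> (\<Sum>b'\<in>UNIV. x $ (a, b'))"
        by (rule member_le_sum) (use couplingsD(1)[OF cp] in auto)
      also have "\<dots> = \<mu> a" using couplingsD(2)[OF cp] .
      also have "\<mu> a \<le> (\<Sum>a'\<in>UNIV. \<mu> a')"
        by (rule member_le_sum) (use \<mu> in \<open>auto simp: prob_vecs_def\<close>)
      also have "\<dots> = 1" using \<mu> by (simp add: prob_vecs_def)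
      finally show ?thesis using couplingsD(1)[OF cp] by simp
    qed
    then have "norm x \<le> real CARD('v\<times>'v)" if "x \<in> ?K" for x
      using norm_le_l1_cart[of x] sum_mono[of UNIV "\<lambda>i. \<bar>x $ i\<bar>" "\<lambda>_. 1"] that by fastforce
    then show ?thesis unfolding bounded_iff by blast
  qed
  ultimately show ?thesis using compact_eq_bounded_closed by blast
qed

lemma optimal_coupling_exists:
  fixes \<mu> \<nu> :: "'v::finite \<Rightarrow> real" and d :: "'v \<Rightarrow> 'v \<Rightarrow> real"
  assumes \<mu>: "\<mu> \<in> prob_vecs" and \<nu>: "\<nu> \<in> prob_vecs"
  obtains \<pi> where "\<pi> \<in> couplings \<mu> \<nu>" "\<And>\<pi>'. \<pi>' \<in> couplings \<mu> \<nu> \<Longrightarrow> transport_cost d \<pi> \<le> transport_cost d \<pi>'"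
proof -
  define K where "K = {x :: real^('v\<times>'v). vec_nth x \<in> couplings \<mu> \<nu>}"
  have "vec_lambda (\<lambda>z. \<mu> (fst z) * \<nu> (snd z)) \<in> K"
    using product_coupling[OF \<mu> \<nu>] by (simp add: K_def vec_lambda_inverse)
  moreover have "continuous_on K (\<lambda>x. transport_cost d (vec_nth x))"
    unfolding transport_cost_def by (intro continuous_intros)
  ultimately obtain x0 where x0: "x0 \<in> K"
    and min: "\<And>x. x \<in> K \<Longrightarrow> transport_cost d (vec_nth x0) \<le> transport_cost d (vec_nth x)"
    using continuous_attains_inf[OF compact_couplings[OF \<mu>, of \<nu>, folded K_def]] by blast
  show ?thesis
  proof (rule that)
    show "vec_nth x0 \<in> couplings \<mu> \<nu>" using x0 by (simp add: K_def)
    fix \<pi>' assume "\<pi>' \<in> couplings \<mu> \<nu>"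
    then have "vec_lambda \<pi>' \<in> K" by (simp add: K_def vec_lambda_inverse)
    from min[OF this] show "transport_cost d (vec_nth x0) \<le> transport_cost d \<pi>'"
      by (simp add: vec_lambda_inverse)
  qed
qed

lemma W1_eq_Inf_transport_cost:
  "W1 lo hi \<mu> \<nu> = Inf (transport_cost (\<lambda>x y. real (graph_dist lo hi x y)) ` couplings \<mu> \<nu>)"
  by (simp add: W1_def transport_cost_def)

lemma W1_le_transport_cost:
  fixes \<mu> \<nu> :: "'v::finite \<Rightarrow> real"
  assumes "\<pi> \<in> couplings \<mu> \<nu>"
  shows "W1 lo hi \<mu> \<nu> \<le> transport_cost (\<lambda>x y. real (graph_dist lo hi x y)) \<pi>"
  unfolding W1_eq_Inf_transport_cost
proof (rule cInf_lower)
  show "bdd_below (transport_cost (\<lambda>x y. real (graph_dist lo hi x y)) ` couplings \<mu> \<nu>)"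
    by (rule bdd_belowI[of _ 0]) (auto simp: transport_cost_def couplings_def intro!: sum_nonneg)
qed (use assms in blast)

lemma W1_attained:
  fixes \<mu> \<nu> :: "'v::finite \<Rightarrow> real"
  assumes "\<mu> \<in> prob_vecs" and "\<nu> \<in> prob_vecs"
  obtains \<pi> where "\<pi> \<in> couplings \<mu> \<nu>" "W1 lo hi \<mu> \<nu> = transport_cost (\<lambda>x y. real (graph_dist lo hi x y)) \<pi>"
proof -
  obtain \<pi> where \<pi>: "\<pi> \<in> couplings \<mu> \<nu>"
    and min: "\<And>\<pi>'. \<pi>' \<in> couplings \<mu> \<nu> \<Longrightarrow>
      transport_cost (\<lambda>x y. real (graph_dist lo hi x y)) \<pi> \<le> transport_cost (\<lambda>x y. real (graph_dist lo hi x y)) \<pi>'"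
    using optimal_coupling_exists[OF assms] by blast
  have "W1 lo hi \<mu> \<nu> = transport_cost (\<lambda>x y. real (graph_dist lo hi x y)) \<pi>"
    unfolding W1_eq_Inf_transport_cost by (rule cInf_eq_minimum) (use \<pi> min in auto)
  with \<pi> that show ?thesis by blast
qed

lemma sum_over_pairs:
  fixes f :: "'a::finite \<times> 'b::finite \<Rightarrow> 'c::comm_monoid_add"
  shows "(\<Sum>z\<in>UNIV. f z) = (\<Sum>a\<in>UNIV. \<Sum>b\<in>UNIV. f (a, b))"
  by (simp add: sum.cartesian_product split_beta)

lemma net_inflow_superposition:
  "net_inflow lo hi (\<lambda>k. \<Sum>z\<in>A. w z * P z k) x = (\<Sum>z\<in>A. w z * net_inflow lo hi (P z) x)"
  unfolding net_inflow_def by (simp add: sum_distrib_left mult_ac sum.swap[of _ A])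

lemma net_inflow_coupling_superposition:
  fixes \<pi> :: "'v::finite \<times> 'v \<Rightarrow> real"
  assumes \<pi>: "\<pi> \<in> couplings \<mu> \<nu>"
    and P: "\<And>z x. net_inflow lo hi (P z) x = (if x = snd z then 1 else 0) - (if x = fst z then 1 else 0)"
  shows "net_inflow lo hi (\<lambda>k. \<Sum>z\<in>UNIV. \<pi> z * P z k) x = \<nu> x - \<mu> x"
proof -
  have "net_inflow lo hi (\<lambda>k. \<Sum>z\<in>UNIV. \<pi> z * P z k) x
      = (\<Sum>z\<in>UNIV. \<pi> z * ((if x = snd z then 1 else 0) - (if x = fst z then 1 else 0)))"
    unfolding net_inflow_superposition P ..
  also have "\<dots> = (\<Sum>z\<in>UNIV. if snd z = x then \<pi> z else 0) - (\<Sum>z\<in>UNIV. if fst z = x then \<pi> z else 0)"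
  proof -
    have "\<pi> z * (if Q then 1 else 0) = (if Q then \<pi> z else 0)" for z Q by simp
    then show ?thesis by (simp add: right_diff_distrib sum_subtractf eq_commute[of x])
  qed
  also have "(\<Sum>z\<in>UNIV. if snd z = x then \<pi> z else 0) = (\<Sum>a\<in>UNIV. \<pi> (a, x))"
    by (simp add: sum_over_pairs)
  also have "(\<Sum>z\<in>UNIV. if fst z = x then \<pi> z else 0) = (\<Sum>b\<in>UNIV. \<pi> (x, b))"
    by (simp add: sum_over_pairs sum.swap[of _ UNIV UNIV])
  finally show ?thesis using couplingsD(2,3)[OF \<pi>] by simp
qed

lemma shortest_path_unit_flows:
  fixes lo hi :: "'e::finite \<Rightarrow> 'v::finite"
  assumes lohi: "\<forall>k. lo k \<noteq> hi k" and conn: "connected_graph lo hi"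
  obtains P where "\<And>z x. net_inflow lo hi (P z) x = (if x = snd z then 1 else 0) - (if x = fst z then 1 else 0)"
    and "\<And>z. (\<Sum>k\<in>UNIV. \<bar>P z k\<bar>) \<le> real (graph_dist lo hi (fst z) (snd z))"
proof -
  have "\<forall>z. \<exists>P. (\<forall>x. net_inflow lo hi P x = (if x = snd z then 1 else 0) - (if x = fst z then 1 else 0))
      \<and> (\<Sum>k\<in>UNIV. \<bar>P k\<bar>) \<le> real (graph_dist lo hi (fst z) (snd z))"
  proof
    fix z :: "'v \<times> 'v"
    obtain xs where xs: "is_walk lo hi xs (fst z) (snd z)" "length xs = Suc (graph_dist lo hi (fst z) (snd z))"
      using shortest_walk_exists[OF conn] .
    from walk_unit_flow[OF lohi xs(1)] xs(2)
    show "\<exists>P. (\<forall>x. net_inflow lo hi P x = (if x = snd z then 1 else 0) - (if x = fst z then 1 else 0))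
      \<and> (\<Sum>k\<in>UNIV. \<bar>P k\<bar>) \<le> real (graph_dist lo hi (fst z) (snd z))" by simp
  qed
  from choice[OF this] show ?thesis using that by blast
qed

lemma flow_of_coupling:
  fixes lo hi :: "'e::finite \<Rightarrow> 'v::finite"
  assumes lohi: "\<forall>k. lo k \<noteq> hi k" and conn: "connected_graph lo hi" and \<pi>: "\<pi> \<in> couplings \<mu> \<nu>"
  obtains J where "\<And>x. net_inflow lo hi J x = \<nu> x - \<mu> x"
    and "(\<Sum>k\<in>UNIV. \<bar>J k\<bar>) \<le> transport_cost (\<lambda>x y. real (graph_dist lo hi x y)) \<pi>"
proof -
  obtain P where P: "\<And>z x. net_inflow lo hi (P z) x = (if x = snd z then 1 else 0) - (if x = fst z then 1 else 0)"
    and P1: "\<And>z. (\<Sum>k\<in>UNIV. \<bar>P z k\<bar>) \<le> real (graph_dist lo hi (fst z) (snd z))"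
    using shortest_path_unit_flows[OF lohi conn] by blast
  have "(\<Sum>k\<in>UNIV. \<bar>\<Sum>z\<in>UNIV. \<pi> z * P z k\<bar>) \<le> (\<Sum>k\<in>UNIV. \<Sum>z\<in>UNIV. \<pi> z * \<bar>P z k\<bar>)"
    using couplingsD(1)[OF \<pi>] by (intro sum_mono order.trans[OF sum_abs]) (simp add: abs_mult)
  also have "\<dots> = (\<Sum>z\<in>UNIV. \<pi> z * (\<Sum>k\<in>UNIV. \<bar>P z k\<bar>))"
    by (subst sum.swap) (simp add: sum_distrib_left)
  also have "\<dots> \<le> transport_cost (\<lambda>x y. real (graph_dist lo hi x y)) \<pi>"
    unfolding transport_cost_def using couplingsD(1)[OF \<pi>] P1
    by (intro sum_mono) (simp add: mult.commute mult_left_mono)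
  finally show ?thesis
    using that net_inflow_coupling_superposition[OF \<pi> P] by blast
qed

lemma W1_le_flow_mass:
  fixes lo hi :: "'e::finite \<Rightarrow> 'v::finite"
  assumes lohi: "\<forall>k. lo k \<noteq> hi k" and conn: "connected_graph lo hi"
    and "\<mu> \<in> prob_vecs" "\<nu> \<in> prob_vecs" and flow: "\<And>x. net_inflow lo hi J x = \<nu> x - \<mu> x"
  shows "W1 lo hi \<mu> \<nu> \<le> (\<Sum>k\<in>UNIV. \<bar>J k\<bar>)"
proof -
  define d where "d x y = real (graph_dist lo hi x y)" for x y
  have tri: "d x z \<le> d x y + d y z" for x y z
    unfolding d_def using graph_dist_triangle[OF conn] by (metis of_nat_add of_nat_le_iff)
  have "\<forall>x. 0 \<le> \<mu> x" "\<forall>x. 0 \<le> \<nu> x" using assms(3,4) by (simp_all add: prob_vecs_def)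
  then obtain \<pi> where "\<pi> \<in> couplings \<mu> \<nu>" "transport_cost d \<pi> \<le> (\<Sum>k\<in>UNIV. \<bar>J k\<bar>)"
    using coupling_of_flow[where d = d, OF lohi tri _ _ _ _ _ flow] graph_dist_edge_le by (force simp: d_def)
  then show ?thesis using W1_le_transport_cost[of \<pi> \<mu> \<nu> lo hi] unfolding d_def by linarith
qed

lemma W1_attained_by_flow:
  fixes lo hi :: "'e::finite \<Rightarrow> 'v::finite"
  assumes lohi: "\<forall>k. lo k \<noteq> hi k" and conn: "connected_graph lo hi"
    and \<mu>: "\<mu> \<in> prob_vecs" and \<nu>: "\<nu> \<in> prob_vecs"
  obtains J where "\<And>x. net_inflow lo hi J x = \<nu> x - \<mu> x" "(\<Sum>k\<in>UNIV. \<bar>J k\<bar>) = W1 lo hi \<mu> \<nu>"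
proof -
  obtain \<pi> where \<pi>: "\<pi> \<in> couplings \<mu> \<nu>" and W: "W1 lo hi \<mu> \<nu> = transport_cost (\<lambda>x y. real (graph_dist lo hi x y)) \<pi>"
    using W1_attained[OF \<mu> \<nu>] .
  obtain J where J: "\<And>x. net_inflow lo hi J x = \<nu> x - \<mu> x"
    and "(\<Sum>k\<in>UNIV. \<bar>J k\<bar>) \<le> W1 lo hi \<mu> \<nu>"
    using flow_of_coupling[OF lohi conn \<pi>] unfolding W by blast
  moreover have "W1 lo hi \<mu> \<nu> \<le> (\<Sum>k\<in>UNIV. \<bar>J k\<bar>)"
    using W1_le_flow_mass[OF lohi conn \<mu> \<nu> J] .
  ultimately show ?thesis using that by (meson antisym)
qed

section \<open>Absolutely continuous functions\<close>

lemma absolutely_continuous_real_on_affine: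
  "absolutely_continuous_real_on (\<lambda>t. a + t * b) c d"
  unfolding absolutely_continuous_real_on_def
proof (intro allI impI)
  fix \<epsilon> :: real assume "\<epsilon> > 0"
  show "\<exists>\<delta>>0. \<forall>(n::nat) u w. (\<forall>i<n. c \<le> u i \<and> u i \<le> w i \<and> w i \<le> d) \<and>
          (\<forall>i<n. \<forall>j<n. i \<noteq> j \<longrightarrow> {u i<..<w i} \<inter> {u j<..<w j} = {}) \<and> (\<Sum>i<n. w i - u i) < \<delta> \<longrightarrow>
          (\<Sum>i<n. \<bar>a + w i * b - (a + u i * b)\<bar>) < \<epsilon>"
  proof (intro exI[of _ "\<epsilon> / (\<bar>b\<bar> + 1)"] conjI allI impI)
    show "\<epsilon> / (\<bar>b\<bar> + 1) > 0" using \<open>\<epsilon> > 0\<close> by simp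
    fix n :: nat and u w :: "nat \<Rightarrow> real"
    assume H: "(\<forall>i<n. c \<le> u i \<and> u i \<le> w i \<and> w i \<le> d) \<and>
          (\<forall>i<n. \<forall>j<n. i \<noteq> j \<longrightarrow> {u i<..<w i} \<inter> {u j<..<w j} = {}) \<and> (\<Sum>i<n. w i - u i) < \<epsilon> / (\<bar>b\<bar> + 1)"
    have "\<bar>a + w i * b - (a + u i * b)\<bar> = \<bar>b\<bar> * (w i - u i)" if "i < n" for i
    proof -
      have "a + w i * b - (a + u i * b) = b * (w i - u i)" by (simp add: algebra_simps)
      then show ?thesis using H that by (simp add: abs_mult)
    qed
    then have "(\<Sum>i<n. \<bar>a + w i * b - (a + u i * b)\<bar>) = \<bar>b\<bar> * (\<Sum>i<n. w i - u i)"
      by (simp add: sum_distrib_left)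
    also have "\<dots> \<le> \<bar>b\<bar> * (\<epsilon> / (\<bar>b\<bar> + 1))" using H by (intro mult_left_mono) auto
    also have "\<dots> < \<epsilon>" using \<open>\<epsilon> > 0\<close> by (simp add: field_simps)
    finally show "(\<Sum>i<n. \<bar>a + w i * b - (a + u i * b)\<bar>) < \<epsilon>" .
  qed
qed

lemma tagged_division_of_real_interval_elem:
  fixes a b :: real
  assumes "p tagged_division_of {a..b}" and "(x, K) \<in> p"
  shows "K = {Inf K..Sup K}" "a \<le> Inf K" "Inf K \<le> Sup K" "Sup K \<le> b" "Inf K \<le> x" "x \<le> Sup K"
proof -
  obtain u v where K: "K = {u..v}" using tagged_division_ofD(4)[OF assms] by auto
  moreover have "x \<in> K" "K \<subseteq> {a..b}" using tagged_division_ofD(2,3)[OF assms] .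
  ultimately show "K = {Inf K..Sup K}" "a \<le> Inf K" "Inf K \<le> Sup K" "Sup K \<le> b" "Inf K \<le> x" "x \<le> Sup K"
    by auto
qed

lemma absolutely_continuous_real_on_tagged_division:
  fixes f :: "real \<Rightarrow> real"
  assumes "absolutely_continuous_real_on f a b" and "\<epsilon> > 0"
  obtains \<delta> where "\<delta> > 0"
    "\<And>p p'. p tagged_division_of {a..b} \<Longrightarrow> p' \<subseteq> p \<Longrightarrow> (\<Sum>(x, K)\<in>p'. Sup K - Inf K) < \<delta>
       \<Longrightarrow> (\<Sum>(x, K)\<in>p'. \<bar>f (Sup K) - f (Inf K)\<bar>) < \<epsilon>"
proof -
  obtain \<delta> where \<delta>: "\<delta> > 0" and ac: "\<forall>(n::nat) c d. (\<forall>i<n. a \<le> c i \<and> c i \<le> d i \<and> d i \<le> b) \<and>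
      (\<forall>i<n. \<forall>j<n. i \<noteq> j \<longrightarrow> {c i<..<d i} \<inter> {c j<..<d j} = {}) \<and> (\<Sum>i<n. d i - c i) < \<delta> \<longrightarrow>
      (\<Sum>i<n. \<bar>f (d i) - f (c i)\<bar>) < \<epsilon>"
    using assms unfolding absolutely_continuous_real_on_def by blast
  show ?thesis
  proof (rule that[OF \<delta>])
    fix p p' assume p: "p tagged_division_of {a..b}" and "p' \<subseteq> p"
      and small: "(\<Sum>(x, K)\<in>p'. Sup K - Inf K) < \<delta>"
    have "finite p'" using p \<open>p' \<subseteq> p\<close> finite_subset by blast
    then obtain en where en: "bij_betw en {..<card p'} p'"
      using ex_bij_betw_nat_finite lessThan_atLeast0 by metis
    define c where "c i = Inf (snd (en i))" for i
    define d where "d i = Sup (snd (en i))" for i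
    have elem: "(fst (en i), snd (en i)) \<in> p" if "i < card p'" for i
      using bij_betw_apply[OF en] that \<open>p' \<subseteq> p\<close> by auto
    note props = tagged_division_of_real_interval_elem[OF p elem]
    have "(\<forall>i<card p'. a \<le> c i \<and> c i \<le> d i \<and> d i \<le> b) \<and>
        (\<forall>i<card p'. \<forall>j<card p'. i \<noteq> j \<longrightarrow> {c i<..<d i} \<inter> {c j<..<d j} = {}) \<and>
        (\<Sum>i<card p'. d i - c i) < \<delta>"
    proof (intro conjI)
      show "\<forall>i<card p'. a \<le> c i \<and> c i \<le> d i \<and> d i \<le> b"
        using props(2-4) by (simp add: c_def d_def)
      show "\<forall>i<card p'. \<forall>j<card p'. i \<noteq> j \<longrightarrow> {c i<..<d i} \<inter> {c j<..<d j} = {}"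
      proof (intro allI impI)
        fix i j assume ij: "i < card p'" "j < card p'" "i \<noteq> j"
        then have "en i \<noteq> en j" using bij_betw_imp_inj_on[OF en] by (auto dest: inj_onD)
        then have "interior (snd (en i)) \<inter> interior (snd (en j)) = {}"
          using tagged_division_ofD(5)[OF p elem elem] ij by (metis prod.collapse)
        then show "{c i<..<d i} \<inter> {c j<..<d j} = {}"
          using props(1)[of i] props(1)[of j] ij by (metis c_def d_def interior_atLeastAtMost_real)
      qed
      have "(\<Sum>i<card p'. d i - c i) = (\<Sum>(x, K)\<in>p'. Sup K - Inf K)"
        using sum.reindex_bij_betw[OF en, of "\<lambda>(x, K). Sup K - Inf K"] by (simp add: c_def d_def split_beta)
      then show "(\<Sum>i<card p'. d i - c i) < \<delta>" using small by simp
    qed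
    then have "(\<Sum>i<card p'. \<bar>f (d i) - f (c i)\<bar>) < \<epsilon>" using ac by blast
    also have "(\<Sum>i<card p'. \<bar>f (d i) - f (c i)\<bar>) = (\<Sum>(x, K)\<in>p'. \<bar>f (Sup K) - f (Inf K)\<bar>)"
      using sum.reindex_bij_betw[OF en, of "\<lambda>(x, K). \<bar>f (Sup K) - f (Inf K)\<bar>"]
      by (simp add: c_def d_def split_beta)
    finally show "(\<Sum>(x, K)\<in>p'. \<bar>f (Sup K) - f (Inf K)\<bar>) < \<epsilon>" .
  qed
qed

lemma has_real_derivative_within_increment_le:
  fixes f :: "real \<Rightarrow> real"
  assumes "(f has_real_derivative D) (at t within S)" and "\<epsilon> > 0"
  shows "\<exists>r>0. \<forall>u\<in>S. \<forall>v\<in>S. u \<le> t \<longrightarrow> t \<le> v \<longrightarrow> t - u < r \<longrightarrow> v - t < r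
           \<longrightarrow> f v - f u \<le> (D + \<epsilon>) * (v - u)"
proof -
  have "(f has_derivative (\<lambda>x. D * x)) (at t within S)"
    using assms(1) by (simp add: has_field_derivative_def)
  then obtain r where r: "r > 0"
    and near: "\<And>s. s \<in> S \<Longrightarrow> \<bar>s - t\<bar> < r \<Longrightarrow> \<bar>f s - f t - D * (s - t)\<bar> \<le> \<epsilon> * \<bar>s - t\<bar>"
    using assms(2) unfolding has_derivative_within_alt by fastforce
  have "f v - f u \<le> (D + \<epsilon>) * (v - u)"
    if "u \<in> S" "v \<in> S" "u \<le> t" "t \<le> v" "t - u < r" "v - t < r" for u v
  proof -
    have "\<bar>f v - f t - D * (v - t)\<bar> \<le> \<epsilon> * (v - t)" "\<bar>f u - f t - D * (u - t)\<bar> \<le> \<epsilon> * (t - u)"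
      using near[of v] near[of u] that by auto
    then show ?thesis by (simp add: abs_le_iff algebra_simps)
  qed
  with r show ?thesis by blast
qed

lemma riemann_sum_real_interval:
  fixes g :: "real \<Rightarrow> real"
  assumes "p tagged_division_of {a..b}"
  shows "(\<Sum>(x, K)\<in>p. Henstock_Kurzweil_Integration.content K *\<^sub>R g x) = (\<Sum>(x, K)\<in>p. (Sup K - Inf K) * g x)"
proof (intro sum.cong refl)
  fix xK assume "xK \<in> p"
  then have "Henstock_Kurzweil_Integration.content (snd xK) = Sup (snd xK) - Inf (snd xK)"
    using tagged_division_of_real_interval_elem(1,3)[OF assms, of "fst xK" "snd xK"] by (metis content_real prod.collapse)
  then show "(case xK of (x, K) \<Rightarrow> Henstock_Kurzweil_Integration.content K *\<^sub>R g x)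
      = (case xK of (x, K) \<Rightarrow> (Sup K - Inf K) * g x)" by (simp add: split_beta)
qed

lemma derivative_gauge_increment_le:
  fixes f h :: "real \<Rightarrow> real"
  assumes der: "\<And>t. t \<in> {a..b} - N \<Longrightarrow> (f has_real_derivative h t) (at t within {a..b})" and "\<epsilon> > 0"
  obtains \<gamma> where "gauge \<gamma>"
    "\<And>p x K. p tagged_division_of {a..b} \<Longrightarrow> \<gamma> fine p \<Longrightarrow> (x, K) \<in> p \<Longrightarrow> x \<notin> N
       \<Longrightarrow> f (Sup K) - f (Inf K) \<le> (h x + \<epsilon>) * (Sup K - Inf K)"
proof -
  have "\<forall>t\<in>{a..b} - N. \<exists>r>0. \<forall>u\<in>{a..b}. \<forall>v\<in>{a..b}. u \<le> t \<longrightarrow> t \<le> v \<longrightarrow> t - u < r \<longrightarrow> v - t < r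
      \<longrightarrow> f v - f u \<le> (h t + \<epsilon>) * (v - u)"
    using has_real_derivative_within_increment_le[OF der \<open>\<epsilon> > 0\<close>] by blast
  from bchoice[OF this] obtain r where r: "\<forall>t\<in>{a..b} - N. r t > 0 \<and> (\<forall>u\<in>{a..b}. \<forall>v\<in>{a..b}. u \<le> t \<longrightarrow> t \<le> v
      \<longrightarrow> t - u < r t \<longrightarrow> v - t < r t \<longrightarrow> f v - f u \<le> (h t + \<epsilon>) * (v - u))"
    by blast
  define \<gamma> where "\<gamma> t = (if t \<in> {a..b} - N then ball t (r t) else UNIV)" for t
  show ?thesis
  proof (rule that)
    show "gauge \<gamma>" using r unfolding gauge_def \<gamma>_def by auto
    fix p x K assume p: "p tagged_division_of {a..b}" and "\<gamma> fine p" and xK: "(x, K) \<in> p" and "x \<notin> N"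
    note elem = tagged_division_of_real_interval_elem[OF p xK]
    have xN: "x \<in> {a..b} - N" using \<open>x \<notin> N\<close> elem(2,4,5,6) by auto
    have "K \<subseteq> ball x (r x)" using \<open>\<gamma> fine p\<close> xK xN unfolding fine_def \<gamma>_def by fastforce
    moreover have "Inf K \<in> K" "Sup K \<in> K" using elem(1,3) by (metis atLeastAtMost_iff order_refl)+
    ultimately have "x - Inf K < r x" "Sup K - x < r x" by (auto simp: dist_real_def)
    moreover have "\<forall>u\<in>{a..b}. \<forall>v\<in>{a..b}. u \<le> x \<longrightarrow> x \<le> v \<longrightarrow> x - u < r x \<longrightarrow> v - x < r x
        \<longrightarrow> f v - f u \<le> (h x + \<epsilon>) * (v - u)" using r xN by blast
    ultimately show "f (Sup K) - f (Inf K) \<le> (h x + \<epsilon>) * (Sup K - Inf K)"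
      using elem(2-6) by simp
  qed
qed

lemma negligible_tagged_length_small:
  fixes a b :: real
  assumes N: "negligible N" and "\<delta> > 0"
  obtains \<gamma> where "gauge \<gamma>"
    "\<And>p. p tagged_division_of {a..b} \<Longrightarrow> \<gamma> fine p \<Longrightarrow> (\<Sum>(x, K)\<in>{(x, K)\<in>p. x \<in> N}. Sup K - Inf K) < \<delta>"
proof -
  define iN where "iN t = (if t \<in> N then 1 else 0 :: real)" for t
  have "(iN has_integral 0) {a..b}" by (rule has_integral_spike[OF N _ has_integral_0]) (simp add: iN_def)
  then obtain \<gamma> where "gauge \<gamma>" and \<gamma>: "\<And>p. p tagged_division_of {a..b} \<Longrightarrow> \<gamma> fine p \<Longrightarrow>
      norm ((\<Sum>(x, K)\<in>p. Henstock_Kurzweil_Integration.content K *\<^sub>R iN x) - 0) < \<delta>"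
    using \<open>\<delta> > 0\<close> unfolding has_integral_real by meson
  show ?thesis
  proof (rule that[OF \<open>gauge \<gamma>\<close>])
    fix p assume p: "p tagged_division_of {a..b}" and "\<gamma> fine p"
    have "(\<Sum>(x, K)\<in>{(x, K)\<in>p. x \<in> N}. Sup K - Inf K) = (\<Sum>(x, K)\<in>p. (Sup K - Inf K) * iN x)"
      using tagged_division_of_finite[OF p]
      by (simp add: iN_def sum.inter_filter case_prod_unfold if_distrib cong: if_cong)
    then show "(\<Sum>(x, K)\<in>{(x, K)\<in>p. x \<in> N}. Sup K - Inf K) < \<delta>"
      using \<gamma>[OF p \<open>\<gamma> fine p\<close>] unfolding riemann_sum_real_interval[OF p] by simp
  qed
qed

text \<open>At tags outside N the derivative controls the increment of f; the tags in N have small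
  total length, so their increments are small by absolute continuity.\<close>
lemma absolutely_continuous_FTC_le:
  fixes f h :: "real \<Rightarrow> real"
  assumes ab: "a \<le> b" and ac: "absolutely_continuous_real_on f a b"
    and hint: "(h has_integral I) {a..b}" and N: "negligible N"
    and der: "\<And>t. t \<in> {a..b} - N \<Longrightarrow> (f has_real_derivative h t) (at t within {a..b})"
  shows "f b - f a \<le> I"
proof (rule field_le_epsilon)
  fix e :: real assume "0 < e"
  define \<epsilon> where "\<epsilon> = e / (b - a + 2)"
  have len: "b - a + 2 > 0" using ab by simp
  have "\<epsilon> + \<epsilon> * (b - a) + \<epsilon> = \<epsilon> * (b - a + 2)" by (simp add: algebra_simps)
  also have "\<dots> = e" using len by (simp add: \<epsilon>_def)
  finally have \<epsilon>: "\<epsilon> > 0" "\<epsilon> + \<epsilon> * (b - a) + \<epsilon> = e" using \<open>0 < e\<close> len by (simp_all add: \<epsilon>_def)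
  obtain \<delta> where "\<delta> > 0" and ac_small: "\<And>p p'. p tagged_division_of {a..b} \<Longrightarrow> p' \<subseteq> p
      \<Longrightarrow> (\<Sum>(x, K)\<in>p'. Sup K - Inf K) < \<delta> \<Longrightarrow> (\<Sum>(x, K)\<in>p'. \<bar>f (Sup K) - f (Inf K)\<bar>) < \<epsilon>"
    using absolutely_continuous_real_on_tagged_division[OF ac \<epsilon>(1)] by blast
  define h' where "h' t = (if t \<in> N then 0 else h t)" for t
  have "(h' has_integral I) {a..b}" by (rule has_integral_spike[OF N _ hint]) (simp add: h'_def)
  then obtain \<gamma>1 where "gauge \<gamma>1" and \<gamma>1: "\<And>p. p tagged_division_of {a..b} \<Longrightarrow> \<gamma>1 fine p \<Longrightarrow>
      norm ((\<Sum>(x, K)\<in>p. Henstock_Kurzweil_Integration.content K *\<^sub>R h' x) - I) < \<epsilon>"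
    using \<epsilon>(1) unfolding has_integral_real by meson
  obtain \<gamma>2 where "gauge \<gamma>2" and \<gamma>2: "\<And>p. p tagged_division_of {a..b} \<Longrightarrow> \<gamma>2 fine p
      \<Longrightarrow> (\<Sum>(x, K)\<in>{(x, K)\<in>p. x \<in> N}. Sup K - Inf K) < \<delta>"
    using negligible_tagged_length_small[OF N \<open>\<delta> > 0\<close>] by blast
  obtain \<gamma>3 where "gauge \<gamma>3" and \<gamma>3: "\<And>p x K. p tagged_division_of {a..b} \<Longrightarrow> \<gamma>3 fine p \<Longrightarrow> (x, K) \<in> p
      \<Longrightarrow> x \<notin> N \<Longrightarrow> f (Sup K) - f (Inf K) \<le> (h x + \<epsilon>) * (Sup K - Inf K)"
    using derivative_gauge_increment_le[OF der \<epsilon>(1)] by blast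
  obtain p where p: "p tagged_division_of {a..b}" and "(\<lambda>t. \<gamma>1 t \<inter> \<gamma>2 t \<inter> \<gamma>3 t) fine p"
    using fine_division_exists_real[OF gauge_Int[OF gauge_Int[OF \<open>gauge \<gamma>1\<close> \<open>gauge \<gamma>2\<close>] \<open>gauge \<gamma>3\<close>]] by metis
  then have fine: "\<gamma>1 fine p" "\<gamma>2 fine p" "\<gamma>3 fine p" by (auto simp: fine_Int)
  define D where "D K = f (Sup K) - f (Inf K)" for K
  have "D K \<le> (Sup K - Inf K) * h' x + \<epsilon> * (Sup K - Inf K) + (if x \<in> N then \<bar>D K\<bar> else 0)"
    if xK: "(x, K) \<in> p" for x K
  proof (cases "x \<in> N")
    case True
    have "0 \<le> \<epsilon> * (Sup K - Inf K)" using tagged_division_of_real_interval_elem(3)[OF p xK] \<epsilon>(1) by simp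
    then show ?thesis using True abs_ge_self[of "D K"] by (simp add: h'_def)
  next
    case False
    then show ?thesis using \<gamma>3[OF p fine(3) xK] by (simp add: D_def h'_def algebra_simps)
  qed
  then have "(\<Sum>(x, K)\<in>p. D K) \<le> (\<Sum>(x, K)\<in>p. (Sup K - Inf K) * h' x + \<epsilon> * (Sup K - Inf K) + (if x \<in> N then \<bar>D K\<bar> else 0))"
    by (intro sum_mono) (metis (no_types, lifting) case_prod_beta prod.collapse)
  then have "f b - f a \<le> (\<Sum>(x, K)\<in>p. (Sup K - Inf K) * h' x + \<epsilon> * (Sup K - Inf K) + (if x \<in> N then \<bar>D K\<bar> else 0))"
    using additive_tagged_division_1[OF ab p, of f] by (simp add: D_def)
  also have "\<dots> = (\<Sum>(x, K)\<in>p. (Sup K - Inf K) * h' x) + \<epsilon> * (\<Sum>(x, K)\<in>p. Sup K - Inf K)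
      + (\<Sum>(x, K)\<in>{(x, K)\<in>p. x \<in> N}. \<bar>D K\<bar>)"
    using tagged_division_of_finite[OF p]
    by (simp add: sum.distrib sum_distrib_left case_prod_unfold sum.inter_filter)
  also have "(\<Sum>(x, K)\<in>p. (Sup K - Inf K) * h' x) < I + \<epsilon>"
    using \<gamma>1[OF p fine(1)] unfolding riemann_sum_real_interval[OF p] by (simp add: abs_less_iff)
  also have "(\<Sum>(x, K)\<in>p. Sup K - Inf K) = b - a"
    using riemann_sum_real_interval[OF p, of "\<lambda>_. 1"] additive_content_tagged_division[of p a b] p ab by simp
  also have "(\<Sum>(x, K)\<in>{(x, K)\<in>p. x \<in> N}. \<bar>D K\<bar>) < \<epsilon>"
    using ac_small[OF p _ \<gamma>2[OF p fine(2)]] by (auto simp: D_def)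
  finally show "f b - f a \<le> I + e" using \<epsilon>(2) by linarith
qed

lemma absolutely_continuous_FTC:
  fixes f h :: "real \<Rightarrow> real"
  assumes "a \<le> b" and ac: "absolutely_continuous_real_on f a b"
    and hint: "(h has_integral I) {a..b}" and N: "negligible N"
    and der: "\<And>t. t \<in> {a..b} - N \<Longrightarrow> (f has_real_derivative h t) (at t within {a..b})"
  shows "f b - f a = I"
proof -
  have "absolutely_continuous_real_on (\<lambda>t. - f t) a b"
    using ac unfolding absolutely_continuous_real_on_def by (simp add: abs_minus_commute)
  moreover have "((\<lambda>t. - h t) has_integral - I) {a..b}" using has_integral_neg[OF hint] .
  ultimately have "- f b - (- f a) \<le> - I"
    using absolutely_continuous_FTC_le[OF \<open>a \<le> b\<close> _ _ N DERIV_minus[OF der]] by blast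
  with absolutely_continuous_FTC_le[OF assms] show ?thesis by simp
qed

section \<open>Admissible curves\<close>

text \<open>The tangent of the convex function y powr q at A, divided by its slope q * A powr (q - 1).\<close>
lemma powr_tangent_bound:
  fixes q A y :: real
  assumes q: "q \<ge> 1" and A: "A > 0" and y: "y \<ge> 0"
  shows "y \<le> A powr (1 - q) / q * y powr q + A * (q - 1) / q"
proof (cases "q = 1")
  case True
  then show ?thesis using y A by simp
next
  case False
  then have q1: "q > 1" using q by simp
  define a where "a = y * A powr ((1 - q) / q)"
  define b where "b = A powr ((q - 1) / q)"
  have "a * b \<le> a powr q / q + b powr (q / (q - 1)) / (q / (q - 1))"
    by (rule Youngs_inequality) (use q1 y in \<open>simp_all add: a_def b_def field_simps\<close>)
  moreover have "a * b = y"
    using A by (simp add: a_def b_def mult.assoc flip: powr_add) (simp add: diff_divide_distrib)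
  moreover have "a powr q = y powr q * A powr (1 - q)"
    using y A q1 by (simp add: a_def powr_mult powr_powr)
  moreover have "b powr (q / (q - 1)) = A"
    using A q1 by (simp add: b_def powr_powr)
  ultimately show ?thesis
    using q1 by (simp add: field_simps)
qed

lemma le_root_if_tangent_bounds:
  fixes q L I :: real
  assumes q: "q \<ge> 1" and L: "0 \<le> L" and I: "0 \<le> I"
    and bound: "\<And>A. A > 0 \<Longrightarrow> L \<le> A powr (1 - q) / q * I + A * (q - 1) / q"
  shows "L \<le> I powr (1 / q)"
proof (cases "L = 0")
  case True
  then show ?thesis by simp
next
  case False
  then have Lp: "L > 0" using L by simp
  have "q * L \<le> L powr (1 - q) * I + L * (q - 1)"
    using bound[OF Lp] q by (simp add: field_simps)
  then have "L powr (q - 1) * L \<le> L powr (q - 1) * (L powr (1 - q) * I)"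
    using Lp by (intro mult_left_mono) (simp_all add: algebra_simps)
  moreover have "L powr (q - 1) * (L powr (1 - q) * I) = I"
    using Lp by (simp add: mult.assoc[symmetric] flip: powr_add)
  moreover have "L powr (q - 1) * L = L powr q"
    using powr_add[of L "q - 1" 1] Lp by simp
  ultimately have "L powr q \<le> I" by simp
  then have "(L powr q) powr (1 / q) \<le> I powr (1 / q)"
    using q Lp by (intro powr_mono2) simp_all
  then show ?thesis using Lp q by (simp add: powr_powr)
qed

lemma admissible_net_inflow_integral:
  fixes lo hi :: "'e::finite \<Rightarrow> 'v::finite"
  assumes adm: "admissible lo hi \<mu> \<nu> f v g"
    and int: "\<And>k. ((\<lambda>t. v t k * g t k) has_integral J k) {0..1}"
  shows "net_inflow lo hi J x = \<nu> x - \<mu> x"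
proof -
  have ac: "absolutely_continuous_real_on (\<lambda>t. f t x) 0 1"
    and ae: "AE t in lborel. t \<in> {0..1} \<longrightarrow> (\<forall>x. ((\<lambda>s. f s x) has_real_derivative
      (\<Sum>k\<in>UNIV. incidence lo hi x k * v t k * g t k)) (at t within {0..1}))"
    and "f 0 = \<mu>" "f 1 = \<nu>"
    using adm unfolding admissible_def by blast+
  obtain N where der: "\<And>t. t \<in> space lborel - N \<Longrightarrow> t \<in> {0..1} \<longrightarrow> (\<forall>x. ((\<lambda>s. f s x) has_real_derivative
      (\<Sum>k\<in>UNIV. incidence lo hi x k * v t k * g t k)) (at t within {0..1}))"
    and "N \<in> null_sets lborel"
    using AE_E3[OF ae] by blast
  then have "negligible N"
    by (simp add: negligible_iff_null_sets null_sets_completionI)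
  have "((\<lambda>t. \<Sum>k\<in>UNIV. incidence lo hi x k * v t k * g t k) has_integral net_inflow lo hi J x) {0..1}"
    unfolding net_inflow_def mult.assoc by (intro has_integral_sum has_integral_mult_right int) simp
  from absolutely_continuous_FTC[OF _ ac this \<open>negligible N\<close>] der
  have "f 1 x - f 0 x = net_inflow lo hi J x" by simp
  with \<open>f 0 = \<mu>\<close> \<open>f 1 = \<nu>\<close> show ?thesis by simp
qed

lemma borel_measurable_indicator_times:
  fixes F :: "real \<Rightarrow> real"
  assumes "F \<in> borel_measurable (restrict_space lborel {0..1})"
  shows "(\<lambda>t. indicator {0..1} t * F t) \<in> borel_measurable lborel"
  using assms by (subst (asm) borel_measurable_restrict_space_iff) simp_all

lemma admissible_flow:
  fixes lo hi :: "'e::finite \<Rightarrow> 'v::finite"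
  assumes adm: "admissible lo hi \<mu> \<nu> f v g"
    and fin: "(\<integral>\<^sup>+ t. ennreal (\<Sum>k\<in>UNIV. g t k * \<bar>v t k\<bar>) * indicator {0..1} t \<partial>lborel) < \<infinity>"
  obtains J where "\<And>x. net_inflow lo hi J x = \<nu> x - \<mu> x"
    and "ennreal (\<Sum>k\<in>UNIV. \<bar>J k\<bar>) \<le> (\<integral>\<^sup>+ t. ennreal (\<Sum>k\<in>UNIV. g t k * \<bar>v t k\<bar>) * indicator {0..1} t \<partial>lborel)"
proof -
  have [measurable]: "(\<lambda>t. v t k) \<in> borel_measurable (restrict_space lborel {0..1})"
    "(\<lambda>t. g t k) \<in> borel_measurable (restrict_space lborel {0..1})" for k
    using adm unfolding admissible_def by blast+
  have g0: "0 \<le> g t k" if "t \<in> {0..1}" for t k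
    using adm that unfolding admissible_def prob_vecs_def by blast
  define G where "G k t = indicator {0..1} t * (g t k * \<bar>v t k\<bar>)" for k t
  define j where "j k t = indicator {0..1} t * (v t k * g t k)" for k t
  define H where "H t = (\<Sum>k\<in>UNIV. G k t)" for t
  have [measurable]: "G k \<in> borel_measurable lborel" "j k \<in> borel_measurable lborel" for k
    unfolding G_def j_def by (intro borel_measurable_indicator_times; measurable)+
  have G0: "0 \<le> G k t" and jG: "\<bar>j k t\<bar> = G k t" and GH: "G k t \<le> H t" for k t
    using g0 by (auto simp: G_def j_def H_def abs_mult indicator_def intro!: member_le_sum sum_nonneg)
  have H0: "0 \<le> H t" for t unfolding H_def using G0 by (simp add: sum_nonneg)
  have [measurable]: "H \<in> borel_measurable lborel" unfolding H_def by measurable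
  have HL: "(\<integral>\<^sup>+ t. ennreal (H t) \<partial>lborel)
      = (\<integral>\<^sup>+ t. ennreal (\<Sum>k\<in>UNIV. g t k * \<bar>v t k\<bar>) * indicator {0..1} t \<partial>lborel)"
    by (intro nn_integral_cong) (simp add: H_def G_def indicator_def flip: sum_distrib_left)
  have Hint: "integrable lborel H"
    using fin H0 HL by (intro integrableI_bounded) simp_all
  have HL': "ennreal (integral\<^sup>L lborel H) = (\<integral>\<^sup>+ t. ennreal (H t) \<partial>lborel)"
    using nn_integral_eq_integral[OF Hint] H0 by simp
  have Gint: "integrable lborel (G k)" and jint: "integrable lborel (j k)" for k
    using GH G0 jG H0 by (auto intro!: Bochner_Integration.integrable_bound[OF Hint])
  define J where "J k = integral\<^sup>L lborel (j k)" for k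
  have "((\<lambda>t. v t k * g t k) has_integral J k) {0..1}" for k
  proof -
    have "(j k has_integral J k) UNIV" unfolding J_def by (rule has_integral_integral_lborel[OF jint])
    moreover have "j k = (\<lambda>t. if t \<in> {0..1} then v t k * g t k else 0)"
      by (auto simp: j_def indicator_def)
    ultimately show ?thesis by (simp only: has_integral_restrict_UNIV)
  qed
  then have "net_inflow lo hi J x = \<nu> x - \<mu> x" for x
    by (rule admissible_net_inflow_integral[OF adm])
  moreover have "(\<Sum>k\<in>UNIV. \<bar>J k\<bar>) \<le> integral\<^sup>L lborel H"
  proof -
    have "(\<Sum>k\<in>UNIV. \<bar>J k\<bar>) \<le> (\<Sum>k\<in>UNIV. integral\<^sup>L lborel (G k))"
      unfolding J_def using jint Gint jG by (intro sum_mono integral_abs_bound_integral) auto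
    also have "\<dots> = integral\<^sup>L lborel H"
      unfolding H_def by (rule Bochner_Integration.integral_sum[symmetric]) (rule Gint)
    finally show ?thesis .
  qed
  then have "ennreal (\<Sum>k\<in>UNIV. \<bar>J k\<bar>) \<le> ennreal (integral\<^sup>L lborel H)" by (rule ennreal_leI)
  ultimately show ?thesis using that HL HL' by metis
qed

lemma weighted_speed_tangent_bound:
  fixes v g :: "real \<Rightarrow> 'e::finite \<Rightarrow> real"
  assumes q: "q \<ge> 1" and "A > 0" and gp: "\<And>t. t \<in> {0..1} \<Longrightarrow> g t \<in> prob_vecs"
    and [measurable]: "\<And>k. (\<lambda>t. v t k) \<in> borel_measurable (restrict_space lborel {0..1})"
      "\<And>k. (\<lambda>t. g t k) \<in> borel_measurable (restrict_space lborel {0..1})"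
  shows "(\<integral>\<^sup>+ t. ennreal (\<Sum>k\<in>UNIV. g t k * \<bar>v t k\<bar>) * indicator {0..1} t \<partial>lborel)
    \<le> ennreal (A powr (1 - q) / q) * (\<integral>\<^sup>+ t. ennreal (\<Sum>k\<in>UNIV. g t k * \<bar>v t k\<bar> powr q) * indicator {0..1} t \<partial>lborel)
      + ennreal (A * (q - 1) / q)"
proof -
  define c1 where "c1 = A powr (1 - q) / q"
  define c2 where "c2 = A * (q - 1) / q"
  have c: "0 \<le> c1" "0 \<le> c2" using \<open>A > 0\<close> q by (simp_all add: c1_def c2_def)
  have [measurable]: "(\<lambda>t. ennreal (\<Sum>k\<in>UNIV. g t k * \<bar>v t k\<bar> powr q) * indicator {0..1} t) \<in> borel_measurable lborel"
  proof -
    have "(\<lambda>t. ennreal (\<Sum>k\<in>UNIV. g t k * \<bar>v t k\<bar> powr q)) \<in> borel_measurable (restrict_space lborel {0..1})"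
      by measurable
    then show ?thesis by (subst (asm) borel_measurable_restrict_space_iff_ennreal) simp_all
  qed
  have "ennreal (\<Sum>k\<in>UNIV. g t k * \<bar>v t k\<bar>) * indicator {0..1} t
      \<le> ennreal c1 * (ennreal (\<Sum>k\<in>UNIV. g t k * \<bar>v t k\<bar> powr q) * indicator {0..1} t)
        + ennreal c2 * indicator {0..1} t" for t
  proof (cases "t \<in> {0..1}")
    case True
    have g0: "0 \<le> g t k" and g1: "(\<Sum>k\<in>UNIV. g t k) = 1" for k
      using gp[OF True] by (simp_all add: prob_vecs_def)
    have "(\<Sum>k\<in>UNIV. g t k * \<bar>v t k\<bar>) \<le> (\<Sum>k\<in>UNIV. g t k * (c1 * \<bar>v t k\<bar> powr q + c2))"
      using powr_tangent_bound[OF q \<open>A > 0\<close>] g0 unfolding c1_def c2_def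
      by (intro sum_mono mult_left_mono) simp_all
    also have "\<dots> = c1 * (\<Sum>k\<in>UNIV. g t k * \<bar>v t k\<bar> powr q) + c2 * (\<Sum>k\<in>UNIV. g t k)"
      by (simp add: distrib_left sum.distrib sum_distrib_left mult_ac)
    finally have "ennreal (\<Sum>k\<in>UNIV. g t k * \<bar>v t k\<bar>) \<le> ennreal (c1 * (\<Sum>k\<in>UNIV. g t k * \<bar>v t k\<bar> powr q) + c2)"
      using g1 by (simp add: ennreal_leI)
    also have "\<dots> = ennreal c1 * ennreal (\<Sum>k\<in>UNIV. g t k * \<bar>v t k\<bar> powr q) + ennreal c2"
      using c g0 by (simp add: ennreal_mult sum_nonneg)
    finally show ?thesis using True by simp
  qed simp
  then have "(\<integral>\<^sup>+ t. ennreal (\<Sum>k\<in>UNIV. g t k * \<bar>v t k\<bar>) * indicator {0..1} t \<partial>lborel)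
      \<le> (\<integral>\<^sup>+ t. ennreal c1 * (ennreal (\<Sum>k\<in>UNIV. g t k * \<bar>v t k\<bar> powr q) * indicator {0..1} t)
        + ennreal c2 * indicator {0..1} t \<partial>lborel)"
    by (rule nn_integral_mono)
  also have "\<dots> = ennreal c1 * (\<integral>\<^sup>+ t. ennreal (\<Sum>k\<in>UNIV. g t k * \<bar>v t k\<bar> powr q) * indicator {0..1} t \<partial>lborel)
      + ennreal c2"
    by (simp add: nn_integral_add nn_integral_cmult nn_integral_cmult_indicator)
  finally show ?thesis by (simp add: c1_def c2_def)
qed

text \<open>Jensen's inequality for the probability measure dt \<otimes> g(t) on [0,1] \<times> E, obtained by
  integrating the tangent bounds of y powr q.\<close>
lemma weighted_speed_le_action:
  fixes v g :: "real \<Rightarrow> 'e::finite \<Rightarrow> real"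
  assumes q: "q \<ge> 1" and gp: "\<And>t. t \<in> {0..1} \<Longrightarrow> g t \<in> prob_vecs"
    and "\<And>k. (\<lambda>t. v t k) \<in> borel_measurable (restrict_space lborel {0..1})"
      "\<And>k. (\<lambda>t. g t k) \<in> borel_measurable (restrict_space lborel {0..1})"
  shows "(\<integral>\<^sup>+ t. ennreal (\<Sum>k\<in>UNIV. g t k * \<bar>v t k\<bar>) * indicator {0..1} t \<partial>lborel) \<le> action q v g"
proof -
  define L where "L = (\<integral>\<^sup>+ t. ennreal (\<Sum>k\<in>UNIV. g t k * \<bar>v t k\<bar>) * indicator {0..1} t \<partial>lborel)"
  define I where "I = (\<integral>\<^sup>+ t. ennreal (\<Sum>k\<in>UNIV. g t k * \<bar>v t k\<bar> powr q) * indicator {0..1} t \<partial>lborel)"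
  show ?thesis
  proof (cases "I = \<infinity>")
    case True
    then show ?thesis by (simp add: action_def enn_root_def I_def)
  next
    case False
    then have I: "I = ennreal (enn2real I)" by (simp add: less_top)
    have bound: "L \<le> ennreal (A powr (1 - q) / q * enn2real I + A * (q - 1) / q)" if "A > 0" for A
    proof -
      define c1 where "c1 = A powr (1 - q) / q"
      define c2 where "c2 = A * (q - 1) / q"
      have c: "0 \<le> c1" "0 \<le> c2" using that q by (simp_all add: c1_def c2_def)
      have "L \<le> ennreal c1 * I + ennreal c2"
        unfolding L_def I_def c1_def c2_def using q that gp assms(3,4) by (rule weighted_speed_tangent_bound)
      also have "\<dots> = ennreal (c1 * enn2real I + c2)"
        using c by (subst I) (simp add: ennreal_mult)
      finally show ?thesis unfolding c1_def c2_def .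
    qed
    have "L < \<infinity>" using le_less_trans[OF bound[OF zero_less_one] ennreal_less_top] by simp
    then have L: "L = ennreal (enn2real L)" by (simp add: less_top)
    have "enn2real L \<le> enn2real I powr (1 / q)"
    proof (rule le_root_if_tangent_bounds[OF q])
      fix A :: real assume "A > 0"
      then have "0 \<le> A powr (1 - q) / q * enn2real I + A * (q - 1) / q" using q by simp
      then show "enn2real L \<le> A powr (1 - q) / q * enn2real I + A * (q - 1) / q"
        using bound[OF \<open>A > 0\<close>] L by (metis ennreal_le_iff)
    qed simp_all
    then have "L \<le> ennreal (enn2real I powr (1 / q))" using L by (metis ennreal_leI)
    then show ?thesis using False by (simp add: action_def enn_root_def flip: I_def L_def)
  qed
qed

lemma W1_le_action:
  fixes lo hi :: "'e::finite \<Rightarrow> 'v::finite"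
  assumes lohi: "\<forall>k. lo k \<noteq> hi k" and conn: "connected_graph lo hi" and q: "q \<ge> 1"
    and \<mu>: "\<mu> \<in> prob_vecs" and \<nu>: "\<nu> \<in> prob_vecs" and adm: "admissible lo hi \<mu> \<nu> f v g"
  shows "ennreal (W1 lo hi \<mu> \<nu>) \<le> action q v g"
proof (cases "action q v g = \<infinity>")
  case False
  have "(\<integral>\<^sup>+ t. ennreal (\<Sum>k\<in>UNIV. g t k * \<bar>v t k\<bar>) * indicator {0..1} t \<partial>lborel) \<le> action q v g"
    using adm q unfolding admissible_def by (intro weighted_speed_le_action) auto
  moreover from this have "(\<integral>\<^sup>+ t. ennreal (\<Sum>k\<in>UNIV. g t k * \<bar>v t k\<bar>) * indicator {0..1} t \<partial>lborel) < \<infinity>"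
    using False by (simp add: le_less_trans less_top)
  then obtain J where "\<And>x. net_inflow lo hi J x = \<nu> x - \<mu> x"
    and "ennreal (\<Sum>k\<in>UNIV. \<bar>J k\<bar>) \<le> (\<integral>\<^sup>+ t. ennreal (\<Sum>k\<in>UNIV. g t k * \<bar>v t k\<bar>) * indicator {0..1} t \<partial>lborel)"
    using admissible_flow[OF adm] by blast
  moreover from this have "ennreal (W1 lo hi \<mu> \<nu>) \<le> ennreal (\<Sum>k\<in>UNIV. \<bar>J k\<bar>)"
    using W1_le_flow_mass[OF lohi conn \<mu> \<nu>] by (simp add: ennreal_leI)
  ultimately show ?thesis by (meson order.trans)
qed simp

lemma flow_as_speed_times_density:
  fixes J :: "'e::finite \<Rightarrow> real"
  obtains w p where "p \<in> prob_vecs" "\<And>k. w k * p k = J k"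
    "(\<Sum>k\<in>UNIV. p k * \<bar>w k\<bar> powr q) = (\<Sum>k\<in>UNIV. \<bar>J k\<bar>) powr q"
proof (cases "(\<Sum>k\<in>UNIV. \<bar>J k\<bar>) = 0")
  case True
  then have "J k = 0" for k by (simp add: sum_nonneg_eq_0_iff)
  moreover have "(\<lambda>_::'e. 1 / real CARD('e)) \<in> prob_vecs" by (simp add: prob_vecs_def)
  ultimately show ?thesis using True that[of "\<lambda>_. 1 / real CARD('e)" "\<lambda>_. 0"] by simp
next
  case False
  define S where "S = (\<Sum>k\<in>UNIV. \<bar>J k\<bar>)"
  have S: "S > 0" using False by (simp add: S_def order.not_eq_order_implies_strict sum_nonneg)
  show ?thesis
  proof (rule that[of "\<lambda>k. \<bar>J k\<bar> / S" "\<lambda>k. S * sgn (J k)"])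
    have sum1: "(\<Sum>k\<in>UNIV. \<bar>J k\<bar> / S) = 1"
      using S unfolding S_def by (simp flip: sum_divide_distrib)
    then show "(\<lambda>k. \<bar>J k\<bar> / S) \<in> prob_vecs"
      using S by (simp add: prob_vecs_def)
    show "S * sgn (J k) * (\<bar>J k\<bar> / S) = J k" for k
      using S by (simp add: sgn_mult_abs)
    have "\<bar>J k\<bar> / S * \<bar>S * sgn (J k)\<bar> powr q = \<bar>J k\<bar> / S * S powr q" for k
      using S by (cases "J k = 0") (simp_all add: abs_mult abs_sgn_eq)
    then have "(\<Sum>k\<in>UNIV. \<bar>J k\<bar> / S * \<bar>S * sgn (J k)\<bar> powr q) = (\<Sum>k\<in>UNIV. \<bar>J k\<bar> / S) * S powr q"
      by (simp only: sum_distrib_right)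
    then show "(\<Sum>k\<in>UNIV. \<bar>J k\<bar> / S * \<bar>S * sgn (J k)\<bar> powr q) = (\<Sum>k\<in>UNIV. \<bar>J k\<bar>) powr q"
      using sum1 by (simp add: S_def)
  qed
qed

lemma admissible_of_flow:
  fixes lo hi :: "'e::finite \<Rightarrow> 'v::finite"
  assumes q: "q \<ge> 1" and \<mu>: "\<mu> \<in> prob_vecs" and \<nu>: "\<nu> \<in> prob_vecs"
    and flow: "\<And>x. net_inflow lo hi J x = \<nu> x - \<mu> x"
  obtains f v g where "admissible lo hi \<mu> \<nu> f v g" "action q v g = ennreal (\<Sum>k\<in>UNIV. \<bar>J k\<bar>)"
proof -
  obtain w p where p: "p \<in> prob_vecs" and wp: "\<And>k. w k * p k = J k"
    and cost: "(\<Sum>k\<in>UNIV. p k * \<bar>w k\<bar> powr q) = (\<Sum>k\<in>UNIV. \<bar>J k\<bar>) powr q"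
    using flow_as_speed_times_density[of J q] by blast
  define f where "f t x = \<mu> x + t * (\<nu> x - \<mu> x)" for t :: real and x
  have "f t \<in> prob_vecs" if "t \<in> {0..1}" for t
  proof -
    have "f t x = (1 - t) * \<mu> x + t * \<nu> x" for x by (simp add: f_def algebra_simps)
    then show ?thesis using \<mu> \<nu> that
      by (simp add: prob_vecs_def sum.distrib flip: sum_distrib_left)
  qed
  moreover have "((\<lambda>s. f s x) has_real_derivative (\<Sum>k\<in>UNIV. incidence lo hi x k * w k * p k)) (at t within {0..1})"
    for t x
    using flow[of x] wp unfolding f_def net_inflow_def by (auto simp: mult.assoc intro!: derivative_eq_intros)
  ultimately have "admissible lo hi \<mu> \<nu> f (\<lambda>_. w) (\<lambda>_. p)"
    using p unfolding admissible_def f_def by (auto simp: absolutely_continuous_real_on_affine)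
  moreover have "action q (\<lambda>_. w) (\<lambda>_. p) = ennreal (\<Sum>k\<in>UNIV. \<bar>J k\<bar>)"
    using q by (simp add: action_def enn_root_def cost nn_integral_cmult_indicator powr_powr sum_nonneg)
  ultimately show ?thesis using that by blast
qed

theorem mainTheorem6:
  fixes lo hi :: "'e::finite \<Rightarrow> 'v::finite" and q :: real
    and \<mu> \<nu> :: "'v \<Rightarrow> real"
  assumes "simple_oriented_graph lo hi"
    and "connected_graph lo hi"
    and "q \<ge> 1"
    and "\<mu> \<in> prob_vecs" and "\<nu> \<in> prob_vecs"
  shows "ennreal (W1 lo hi \<mu> \<nu>) =
           (INF (f, v, g) \<in> {(f, v, g). admissible lo hi \<mu> \<nu> f v g}. action q v g)
     \<and> (\<exists>f v g. admissible lo hi \<mu> \<nu> f v g \<and> action q v g = ennreal (W1 lo hi \<mu> \<nu>))"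
proof -
  have lohi: "\<forall>k. lo k \<noteq> hi k" using assms(1) by (simp add: simple_oriented_graph_def)
  obtain J where J: "\<And>x. net_inflow lo hi J x = \<nu> x - \<mu> x" "(\<Sum>k\<in>UNIV. \<bar>J k\<bar>) = W1 lo hi \<mu> \<nu>"
    using W1_attained_by_flow[OF lohi assms(2,4,5)] by blast
  obtain f v g where adm: "admissible lo hi \<mu> \<nu> f v g" and act: "action q v g = ennreal (W1 lo hi \<mu> \<nu>)"
    using admissible_of_flow[OF assms(3,4,5) J(1)] unfolding J(2) by blast
  have "ennreal (W1 lo hi \<mu> \<nu>) \<le> (INF (f, v, g) \<in> {(f, v, g). admissible lo hi \<mu> \<nu> f v g}. action q v g)"
    using W1_le_action[OF lohi assms(2-5)] by (auto intro!: INF_greatest)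
  moreover have "(INF (f, v, g) \<in> {(f, v, g). admissible lo hi \<mu> \<nu> f v g}. action q v g) \<le> action q v g"
    using adm by (auto intro!: INF_lower2[of "(f, v, g)"])
  ultimately show ?thesis using adm act by (metis antisym)
qed

end
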